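(* (i) The supremum defining $|B|_c^2$ is achieved. (ii) For any $B$ with $|B|<|B|_c$, the infimum defining $(|\xi|^B_{vc})^2$ is achieved; moreover, as a function of $|B|$ on $0<|B|<|B|_c$, $|\xi|^B_{vc}$ is continuous and strictly increasing, with $|\xi|^B_{vc}\to0$ as $|B|\to0$ and $|\xi|^B_{vc}\to\infty$ as $|B|\to|B|_c$. (iii) For any $B$ with $|B|<|B|_c$, the supremum defining $(|\xi|^B_{hc})^2$ is achieved; moreover, as a function of $|B|$ on $0<|B|<|B|_c$, $|\xi|^B_{hc}$ is continuous and strictly decreasing, with $|\xi|^B_{hc}\to\infty$ as $|B|\to0$ and $|\xi|^B_{hc}\to0$ as $|B|\to|B|_c$.
   Context: $g>0$, $[\rho]>0$ constants, $B\in\mathbb{R}$. $|B|_c^2:=\sup\{g[\rho]\psi(0)^2/\int_{-1}^1|\psi'|^2dx_2: 0\ne\psi\in H_0^1((-1,1))\}$; $(|\xi|^B_{vc})^2:=\inf\{|B|^2\int_{-1}^1|\psi''|^2dx_2/(g[\rho]\psi(0)^2-|B|^2\int_{-1}^1|\psi'|^2dx_2):\psi\in H_0^2((-1,1)),\ g[\rho]\psi(0)^2-|B|^2\int_{-1}^1|\psi'|^2dx_2>0\}$; $(|\xi|^B_{hc})^2:=\sup\{(g[\rho]\psi(0)^2-|B|^2\int_{-1}^1|\psi'|^2dx_2)/(|B|^2\int_{-1}^1|\psi|^2dx_2): 0\ne\psi\in H_0^1((-1,1))\}$. *)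

theory Defs
  imports "HOL-Analysis.Analysis"
begin

text \<open>Sobolev space H_0^1((-1,1)), one-dimensional: a function psi (its continuous
representative) together with its weak derivative d, where d is in L^2(-1,1),
psi is the indefinite integral of d starting at -1 (so psi(-1) = 0), and psi(1) = 0.\<close>
definition H01 :: "((real \<Rightarrow> real) \<times> (real \<Rightarrow> real)) set" where
  "H01 = {(\<psi>, d).
     set_borel_measurable lborel {-1..1} d \<and>
     set_integrable lborel {-1..1} (\<lambda>x. (d x)\<^sup>2) \<and>
     (\<forall>x\<in>{-1..1}. \<psi> x = set_lebesgue_integral lborel {-1..x} d) \<and>
     \<psi> 1 = 0}"

text \<open>H_0^2((-1,1)): psi with first and second weak derivatives d, dd such that
psi and d both lie in H_0^1 (so psi, psi' vanish at both endpoints, psi'' in L^2).\<close>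
definition H02 :: "((real \<Rightarrow> real) \<times> (real \<Rightarrow> real) \<times> (real \<Rightarrow> real)) set" where
  "H02 = {(\<psi>, d, dd). (\<psi>, d) \<in> H01 \<and> (d, dd) \<in> H01}"

definition nonzero :: "(real \<Rightarrow> real) \<Rightarrow> bool" where
  "nonzero \<psi> \<longleftrightarrow> (\<exists>x\<in>{-1..1}. \<psi> x \<noteq> 0)"

definition L2sq :: "(real \<Rightarrow> real) \<Rightarrow> real" where
  "L2sq f = set_lebesgue_integral lborel {-1..1} (\<lambda>x. (f x)\<^sup>2)"

text \<open>Quotients in the three variational problems (rho stands for the jump [rho]).\<close>
definition Qc :: "real \<Rightarrow> real \<Rightarrow> (real \<Rightarrow> real) \<Rightarrow> (real \<Rightarrow> real) \<Rightarrow> real" where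
  "Qc g rho \<psi> d = g * rho * (\<psi> 0)\<^sup>2 / L2sq d"

definition Dvc :: "real \<Rightarrow> real \<Rightarrow> real \<Rightarrow> (real \<Rightarrow> real) \<Rightarrow> (real \<Rightarrow> real) \<Rightarrow> real" where
  "Dvc g rho B \<psi> d = g * rho * (\<psi> 0)\<^sup>2 - \<bar>B\<bar>\<^sup>2 * L2sq d"

definition Qvc :: "real \<Rightarrow> real \<Rightarrow> real \<Rightarrow> (real \<Rightarrow> real) \<Rightarrow> (real \<Rightarrow> real) \<Rightarrow> (real \<Rightarrow> real) \<Rightarrow> real" where
  "Qvc g rho B \<psi> d dd = \<bar>B\<bar>\<^sup>2 * L2sq dd / Dvc g rho B \<psi> d"

definition Qhc :: "real \<Rightarrow> real \<Rightarrow> real \<Rightarrow> (real \<Rightarrow> real) \<Rightarrow> (real \<Rightarrow> real) \<Rightarrow> real" where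
  "Qhc g rho B \<psi> d = Dvc g rho B \<psi> d / (\<bar>B\<bar>\<^sup>2 * L2sq \<psi>)"

definition Bc2 :: "real \<Rightarrow> real \<Rightarrow> real" where
  "Bc2 g rho = Sup {Qc g rho \<psi> d | \<psi> d. (\<psi>, d) \<in> H01 \<and> nonzero \<psi>}"

definition Bc :: "real \<Rightarrow> real \<Rightarrow> real" where
  "Bc g rho = sqrt (Bc2 g rho)"

definition xi_vc2 :: "real \<Rightarrow> real \<Rightarrow> real \<Rightarrow> real" where
  "xi_vc2 g rho B = Inf {Qvc g rho B \<psi> d dd | \<psi> d dd. (\<psi>, d, dd) \<in> H02 \<and> Dvc g rho B \<psi> d > 0}"

definition xi_vc :: "real \<Rightarrow> real \<Rightarrow> real \<Rightarrow> real" where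
  "xi_vc g rho B = sqrt (xi_vc2 g rho B)"

definition xi_hc2 :: "real \<Rightarrow> real \<Rightarrow> real \<Rightarrow> real" where
  "xi_hc2 g rho B = Sup {Qhc g rho B \<psi> d | \<psi> d. (\<psi>, d) \<in> H01 \<and> nonzero \<psi>}"

definition xi_hc :: "real \<Rightarrow> real \<Rightarrow> real \<Rightarrow> real" where
  "xi_hc g rho B = sqrt (xi_hc2 g rho B)"

end

theory Submission
  imports Defs
begin

text \<open>
  Each quotient is controlled by a sharp bound for \<open>\<psi>(0)\<^sup>2\<close> in terms of an energy:
  \<open>2 \<psi>(0)\<^sup>2 \<le> \<integral>\<psi>'\<^sup>2\<close>, \<open>2 \<psi>(0)\<^sup>2 \<le> (tanh k / k) (\<integral>\<psi>'\<^sup>2 + k\<^sup>2 \<integral>\<psi>\<^sup>2)\<close> and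
  \<open>2 \<psi>(0)\<^sup>2 \<le> ((1 - T(m/2)) / m\<^sup>2) (\<integral>\<psi>''\<^sup>2 + m\<^sup>2 \<integral>\<psi>'\<^sup>2)\<close> with \<open>T(y) = tanh y / y\<close>.
  On each half of \<open>(-1, 1)\<close> one integrates by parts against a solution \<open>W\<close> of the
  Euler-Lagrange equation, which expresses \<open>\<psi>(0)\<close> through \<open>\<integral> \<psi>' W + \<psi> W'\<close>; AM-GM then
  bounds this by the energy, with equality for the explicit extremals (a tent,
  \<open>sinh (k (1 - \<bar>x\<bar>))\<close> and a fourth-order analogue). Hence \<open>|B|\<^sub>c\<^sup>2 = g[\<rho>]/2\<close>, and since \<open>T\<close>
  is a decreasing bijection of \<open>(0, \<infinity>)\<close> onto \<open>(0, 1)\<close>, \<open>\<xi>\<^sub>h\<^sub>c = T\<^sup>-\<^sup>1(|B|\<^sup>2/|B|\<^sub>c\<^sup>2)\<close> and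
  \<open>\<xi>\<^sub>v\<^sub>c = 2 T\<^sup>-\<^sup>1(1 - |B|\<^sup>2/|B|\<^sub>c\<^sup>2)\<close>, from which continuity, monotonicity and the limits follow.
\<close>

lemma set_integrable_mult_continuous_on:
  fixes f g :: "real \<Rightarrow> real"
  assumes f: "set_integrable lborel {a..b} f" and g: "continuous_on {a..b} g"
  shows "set_integrable lborel {a..b} (\<lambda>x. f x * g x)"
proof -
  have "bounded (g ` {a..b})"
    by (rule compact_imp_bounded[OF compact_continuous_image[OF g compact_Icc]])
  then obtain M where M: "\<forall>x\<in>{a..b}. \<bar>g x\<bar> \<le> M" by (auto simp: bounded_real)
  have mf: "(\<lambda>x. indicator {a..b} x *\<^sub>R f x) \<in> borel_measurable lborel"
    using f unfolding set_integrable_def by (rule borel_measurable_integrable)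
  have mg: "(\<lambda>x. indicator {a..b} x *\<^sub>R g x) \<in> borel_measurable lborel"
    using borel_measurable_continuous_on_indicator[OF _ g] by simp
  have "(\<lambda>x. indicator {a..b} x *\<^sub>R (f x * g x)) =
      (\<lambda>x. (indicator {a..b} x *\<^sub>R f x) * (indicator {a..b} x *\<^sub>R g x))"
    by (auto simp: indicator_def fun_eq_iff)
  then have m: "set_borel_measurable lborel {a..b} (\<lambda>x. f x * g x)"
    unfolding set_borel_measurable_def using mf mg by simp
  have "set_integrable lborel {a..b} (\<lambda>x. M * \<bar>f x\<bar>)"
    using set_integrable_abs[OF f] by (rule set_integrable_mult_right)
  then show ?thesis
  proof (rule set_integrable_bound[OF _ m], intro always_eventually allI impI)
    fix x assume "x \<in> {a..b}"
    then have "\<bar>f x\<bar> * \<bar>g x\<bar> \<le> \<bar>f x\<bar> * M" using M by (simp add: mult_left_mono)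
    moreover have "M * \<bar>f x\<bar> \<le> \<bar>M\<bar> * \<bar>f x\<bar>" by (simp add: mult_right_mono)
    ultimately show "norm (f x * g x) \<le> norm (M * \<bar>f x\<bar>)" by (simp add: abs_mult mult.commute)
  qed
qed

lemma set_integral_Ioc_eq_Icc:
  fixes f :: "real \<Rightarrow> real"
  assumes "a \<le> b"
  shows "(LINT x:{a<..b}|lborel. f x) = (LINT x:{a..b}|lborel. f x)"
  using interval_integral_Ioc[of a b f] interval_integral_Icc[of a b f] assms by simp

lemma set_integral_Icc_split:
  fixes f :: "real \<Rightarrow> real"
  assumes f: "set_integrable lborel {a..b} f" and "a \<le> c" "c \<le> b"
  shows "(LINT x:{a..b}|lborel. f x) = (LINT x:{a..c}|lborel. f x) + (LINT x:{c..b}|lborel. f x)"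
proof -
  have "{a..b} = {a..c} \<union> {c<..b}" "{a..c} \<inter> {c<..b} = {}" using assms by auto
  moreover have "set_integrable lborel {a..c} f" "set_integrable lborel {c<..b} f"
    by (rule set_integrable_subset[OF f], use assms in auto)+
  ultimately show ?thesis
    using set_integral_Un[of "{a..c}" "{c<..b}" lborel f] set_integral_Ioc_eq_Icc[OF assms(3), of f]
    by simp
qed

lemma set_integral_FTC_Icc:
  fixes F f :: "real \<Rightarrow> real"
  assumes "a \<le> b" "\<And>x. (F has_real_derivative f x) (at x)" "\<And>x. isCont f x"
  shows "(LINT x:{a..b}|lborel. f x) = F b - F a"
  using integral_FTC_Icc_real[of a b F f] assms
  unfolding set_lebesgue_integral_def by (simp add: mult.commute)

lemma set_integral_square_nonneg:
  fixes f :: "'a \<Rightarrow> real"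
  shows "0 \<le> (LINT x:A|M. (f x)\<^sup>2)"
  unfolding set_lebesgue_integral_def by (rule integral_nonneg_AE) (auto simp: indicator_def)

lemma set_integral_mult_le_AM_GM:
  fixes f g :: "'a \<Rightarrow> real"
  assumes \<alpha>: "0 < \<alpha>"
    and fg: "set_integrable M A (\<lambda>x. f x * g x)"
    and f: "set_integrable M A (\<lambda>x. (f x)\<^sup>2)" and g: "set_integrable M A (\<lambda>x. (g x)\<^sup>2)"
  shows "2 * (LINT x:A|M. f x * g x) \<le> \<alpha> * (LINT x:A|M. (f x)\<^sup>2) + (LINT x:A|M. (g x)\<^sup>2) / \<alpha>"
    and "AE x\<in>A in M. \<alpha> * f x = g x \<Longrightarrow>
      2 * (LINT x:A|M. f x * g x) = \<alpha> * (LINT x:A|M. (f x)\<^sup>2) + (LINT x:A|M. (g x)\<^sup>2) / \<alpha>"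
proof -
  define D where "D x = (\<alpha> * f x - g x)\<^sup>2 / \<alpha>" for x
  have D_eq: "D = (\<lambda>x. (\<alpha> * (f x)\<^sup>2 + (g x)\<^sup>2 / \<alpha>) - 2 * (f x * g x))"
    using \<alpha> by (auto simp: D_def fun_eq_iff power2_eq_square field_simps)
  have sum: "set_integrable M A (\<lambda>x. \<alpha> * (f x)\<^sup>2 + (g x)\<^sup>2 / \<alpha>)"
    using f g by auto
  have D_int: "set_integrable M A D"
    unfolding D_eq using sum fg by auto
  have D_val: "(LINT x:A|M. D x) =
      \<alpha> * (LINT x:A|M. (f x)\<^sup>2) + (LINT x:A|M. (g x)\<^sup>2) / \<alpha> - 2 * (LINT x:A|M. f x * g x)"
    unfolding D_eq
    using set_integral_diff(2)[OF sum set_integrable_mult_right[OF fg, of 2]]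
      set_integral_add(2)[OF set_integrable_mult_right[OF f] set_integrable_divide[OF g]]
    by (simp add: set_integral_mult_right set_integral_divide_zero)
  moreover have "0 \<le> (LINT x:A|M. D x)"
    unfolding set_lebesgue_integral_def D_def using \<alpha>
    by (intro integral_nonneg_AE) (auto simp: indicator_def)
  ultimately show "2 * (LINT x:A|M. f x * g x) \<le> \<alpha> * (LINT x:A|M. (f x)\<^sup>2) + (LINT x:A|M. (g x)\<^sup>2) / \<alpha>"
    by simp
  assume eq: "AE x\<in>A in M. \<alpha> * f x = g x"
  have "(LINT x:A|M. D x) = (LINT x:A|M. 0)"
    unfolding set_lebesgue_integral_def
  proof (rule integral_cong_AE)
    show "(\<lambda>x. indicator A x *\<^sub>R D x) \<in> borel_measurable M"
      using D_int unfolding set_integrable_def by (rule borel_measurable_integrable)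
    show "AE x in M. indicator A x *\<^sub>R D x = indicator A x *\<^sub>R (0::real)"
      using eq by eventually_elim (auto simp: D_def indicator_def)
  qed simp
  with D_val show
    "2 * (LINT x:A|M. f x * g x) = \<alpha> * (LINT x:A|M. (f x)\<^sup>2) + (LINT x:A|M. (g x)\<^sup>2) / \<alpha>"
    by simp
qed

text \<open>Fubini: both sides integrate \<open>d t w x\<close> over the triangle \<open>a \<le> t \<le> x \<le> b\<close>.\<close>
lemma set_integral_indefinite_integral_mult:
  fixes d W w :: "real \<Rightarrow> real"
  assumes ab: "a \<le> b" and d: "set_integrable lborel {a..b} d"
    and W: "\<And>x. (W has_real_derivative w x) (at x)" and w: "continuous_on UNIV w"
  shows "set_integrable lborel {a..b} (\<lambda>x. w x * (LINT t:{a..x}|lborel. d t))"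
    and "(LINT x:{a..b}|lborel. w x * (LINT t:{a..x}|lborel. d t)) =
      (LINT t:{a..b}|lborel. d t * (W b - W t))"
proof -
  define D where "D t = indicator {a..b} t *\<^sub>R d t" for t :: real
  have D_meas[measurable]: "D \<in> borel_measurable lborel"
    using d unfolding set_integrable_def D_def[abs_def] by (rule borel_measurable_integrable)
  have w_meas[measurable]: "w \<in> borel_measurable lborel"
    using borel_measurable_continuous_onI[OF w] by simp
  have "bounded (w ` {a..b})"
    by (rule compact_imp_bounded[OF compact_continuous_image[OF continuous_on_subset[OF w] compact_Icc]]) simp
  then obtain M where M: "\<forall>x\<in>{a..b}. \<bar>w x\<bar> \<le> M" by (auto simp: bounded_real)
  have M0: "0 \<le> M" using M ab by force
  define f where "f t x = (if a \<le> t \<and> t \<le> x \<and> x \<le> b then D t * w x else 0)" for t x :: real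
  define G where "G t x = \<bar>D t\<bar> * (indicator {a..b} x * M)" for t x :: real
  have D_abs_int: "integrable lborel (\<lambda>t. \<bar>D t\<bar>)"
    using d unfolding set_integrable_def D_def[abs_def] by (rule integrable_abs)
  have G_int: "integrable (lborel \<Otimes>\<^sub>M lborel) (\<lambda>(t, x). G t x)"
  proof (rule lborel_pair.Fubini_integrable)
    show "(\<lambda>(t, x). G t x) \<in> borel_measurable (lborel \<Otimes>\<^sub>M lborel)" unfolding G_def by measurable
    have "(\<integral>x. norm (G t x) \<partial>lborel) = \<bar>D t\<bar> * (M * (b - a))" for t
    proof -
      have "(\<integral>x. norm (G t x) \<partial>lborel) = (\<integral>x. (\<bar>D t\<bar> * M) * indicator {a..b} x \<partial>lborel)"
        using M0 by (intro Bochner_Integration.integral_cong) (auto simp: G_def abs_mult)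
      then show ?thesis using ab by (simp del: measure_lborel_Icc)
    qed
    then show "integrable lborel (\<lambda>t. \<integral>x. norm (case (t, x) of (t, x) \<Rightarrow> G t x) \<partial>lborel)"
      using D_abs_int by simp
    have "integrable lborel (indicat_real {a..b})"
      using borel_integrable_atLeastAtMost'[of a b "\<lambda>x. 1::real"] unfolding set_integrable_def by simp
    then show "AE t in lborel. integrable lborel (\<lambda>x. case (t, x) of (t, x) \<Rightarrow> G t x)"
      unfolding G_def by simp
  qed
  have f_int: "integrable (lborel \<Otimes>\<^sub>M lborel) (\<lambda>(t, x). f t x)"
  proof (rule Bochner_Integration.integrable_bound[OF G_int])
    show "(\<lambda>(t, x). f t x) \<in> borel_measurable (lborel \<Otimes>\<^sub>M lborel)" unfolding f_def by measurable
    show "AE p in lborel \<Otimes>\<^sub>M lborel. norm (case p of (t, x) \<Rightarrow> f t x) \<le> norm (case p of (t, x) \<Rightarrow> G t x)"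
      using M M0 by (intro always_eventually) (auto simp: f_def G_def abs_mult intro!: mult_left_mono)
  qed
  have inner_t: "(\<integral>t. f t x \<partial>lborel) = indicator {a..b} x * (w x * (LINT t:{a..x}|lborel. d t))" for x
  proof (cases "x \<in> {a..b}")
    case True
    have "(\<integral>t. f t x \<partial>lborel) = (\<integral>t. (indicator {a..x} t *\<^sub>R d t) * w x \<partial>lborel)"
      using True by (intro Bochner_Integration.integral_cong) (auto simp: f_def D_def indicator_def)
    then show ?thesis using True by (simp add: set_lebesgue_integral_def mult.commute)
  next
    case False
    then have "(\<lambda>t. f t x) = (\<lambda>t. 0)" by (auto simp: f_def fun_eq_iff)
    then show ?thesis using False by simp
  qed
  have inner_x: "(\<integral>x. f t x \<partial>lborel) = indicator {a..b} t * (d t * (W b - W t))" for t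
  proof (cases "t \<in> {a..b}")
    case True
    have "(\<integral>x. f t x \<partial>lborel) = (\<integral>x. d t * (w x * indicator {t..b} x) \<partial>lborel)"
      using True by (intro Bochner_Integration.integral_cong) (auto simp: f_def D_def indicator_def)
    also have "\<dots> = d t * (W b - W t)"
      using True integral_FTC_Icc_real[of t b W w] W w by (simp add: continuous_on_eq_continuous_at)
    finally show ?thesis using True by simp
  next
    case False
    then have "(\<lambda>x. f t x) = (\<lambda>x. 0)" by (auto simp: f_def fun_eq_iff)
    then show ?thesis using False by simp
  qed
  show "set_integrable lborel {a..b} (\<lambda>x. w x * (LINT t:{a..x}|lborel. d t))"
    using lborel_pair.integrable_snd[OF f_int] unfolding inner_t set_integrable_def by simp
  show "(LINT x:{a..b}|lborel. w x * (LINT t:{a..x}|lborel. d t)) = (LINT t:{a..b}|lborel. d t * (W b - W t))"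
    using lborel_pair.Fubini_integral[OF f_int] unfolding inner_t inner_x set_lebesgue_integral_def
    by simp
qed

section \<open>The space \<open>H\<^sub>0\<^sup>1\<close>\<close>

lemma H01_deriv_set_integrable_square:
  assumes "(\<psi>, d) \<in> H01" "-1 \<le> a" "b \<le> 1"
  shows "set_integrable lborel {a..b} (\<lambda>x. (d x)\<^sup>2)"
  by (rule set_integrable_subset[of _ "{-1..1}"]) (use assms in \<open>auto simp: H01_def\<close>)

text \<open>On a set of finite measure, \<open>L\<^sup>2\<close> functions are integrable since \<open>\<bar>d\<bar> \<le> 1 + d\<^sup>2\<close>.\<close>
lemma H01_deriv_set_integrable:
  assumes H: "(\<psi>, d) \<in> H01" and "-1 \<le> a" "b \<le> 1"
  shows "set_integrable lborel {a..b} d"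
proof -
  have m: "set_borel_measurable lborel {-1..1} d"
    using H by (auto simp: H01_def)
  have "set_integrable lborel {-1..1} (\<lambda>x. 1 + (d x)\<^sup>2)"
    using set_integral_add(1)[OF borel_integrable_atLeastAtMost'[of "-1::real" 1 "\<lambda>x. 1"]
        H01_deriv_set_integrable_square[OF H, of "-1" 1]]
    by simp
  then have "set_integrable lborel {-1..1} d"
  proof (rule set_integrable_bound[OF _ m], intro always_eventually allI impI)
    fix x
    have "2 * \<bar>d x\<bar> \<le> (d x)\<^sup>2 + 1"
      using zero_le_power2[of "\<bar>d x\<bar> - 1"] by (simp add: power2_eq_square algebra_simps)
    then show "norm (d x) \<le> norm (1 + (d x)\<^sup>2)" by simp
  qed
  then show ?thesis by (rule set_integrable_subset) (use assms in auto)
qed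

lemma H01_eq_integral:
  assumes H: "(\<psi>, d) \<in> H01" and "-1 \<le> a" "a \<le> x" "x \<le> 1"
  shows "\<psi> x = \<psi> a + (LINT t:{a..x}|lborel. d t)"
proof -
  have "\<psi> x = (LINT t:{-1..x}|lborel. d t)" "\<psi> a = (LINT t:{-1..a}|lborel. d t)"
    using assms by (auto simp: H01_def)
  then show ?thesis
    using set_integral_Icc_split[OF H01_deriv_set_integrable[OF H, of "-1" x], of a] assms by simp
qed

lemma H01_left_endpoint: "(\<psi>, d) \<in> H01 \<Longrightarrow> \<psi> (-1) = 0"
  using set_integral_Ioc_eq_Icc[of "-1" "-1" d]
  by (auto simp: H01_def set_lebesgue_integral_def)

lemma H01_right_endpoint: "(\<psi>, d) \<in> H01 \<Longrightarrow> \<psi> 1 = 0"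
  by (simp add: H01_def)

lemma H01_continuous_on:
  assumes H: "(\<psi>, d) \<in> H01"
  shows "continuous_on {-1..1} \<psi>"
proof -
  have d: "d integrable_on {-1..1}"
    using set_borel_integral_eq_integral(1)[OF H01_deriv_set_integrable[OF H order_refl order_refl]] .
  have "\<psi> x = integral {-1..x} d" if "x \<in> {-1..1}" for x
    using set_borel_integral_eq_integral(2)[OF H01_deriv_set_integrable[OF H, of "-1" x]] H that
    by (auto simp: H01_def)
  then show ?thesis
    using indefinite_integral_continuous_1[OF d] by (metis (no_types, lifting) continuous_on_cong)
qed

lemma H01_set_integrable_continuous_mult:
  assumes H: "(\<psi>, d) \<in> H01" and "-1 \<le> a" "b \<le> 1" and h: "continuous_on {a..b} h"
  shows "set_integrable lborel {a..b} (\<lambda>x. \<psi> x * h x)"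
proof (rule borel_integrable_atLeastAtMost')
  have "continuous_on {a..b} \<psi>"
    by (rule continuous_on_subset[OF H01_continuous_on[OF H]]) (use assms in auto)
  then show "continuous_on {a..b} (\<lambda>x. \<psi> x * h x)" using h by (intro continuous_intros)
qed

lemma H01_set_integrable_square:
  assumes H: "(\<psi>, d) \<in> H01" and "-1 \<le> a" "b \<le> 1"
  shows "set_integrable lborel {a..b} (\<lambda>x. (\<psi> x)\<^sup>2)"
  using H01_set_integrable_continuous_mult[OF assms, of \<psi>] continuous_on_subset[OF H01_continuous_on[OF H]] assms
  by (simp add: power2_eq_square)

lemma H01_integration_by_parts:
  fixes \<psi> d W w :: "real \<Rightarrow> real"
  assumes H: "(\<psi>, d) \<in> H01" and a: "-1 \<le> a" and ab: "a \<le> b" and b: "b \<le> 1"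
    and W: "\<And>x. (W has_real_derivative w x) (at x)" and w: "continuous_on UNIV w"
  shows "(LINT x:{a..b}|lborel. d x * W x + \<psi> x * w x) = \<psi> b * W b - \<psi> a * W a"
proof -
  have W_cont: "continuous_on {a..b} W"
    using W by (meson DERIV_isCont continuous_at_imp_continuous_on)
  have d_int: "set_integrable lborel {a..b} d" using H01_deriv_set_integrable[OF H a b] .
  have dW_int: "set_integrable lborel {a..b} (\<lambda>x. d x * W x)"
    by (rule set_integrable_mult_continuous_on[OF d_int W_cont])
  have w_int: "set_integrable lborel {a..b} w"
    using borel_integrable_atLeastAtMost'[OF continuous_on_subset[OF w]] by simp
  note swap = set_integral_indefinite_integral_mult[OF ab d_int W w]
  have \<psi>_eq: "\<psi> x * w x = \<psi> a * w x + w x * (LINT t:{a..x}|lborel. d t)" if "x \<in> {a..b}" for x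
    using H01_eq_integral[OF H a, of x] that b by (auto simp: algebra_simps)
  have "(LINT x:{a..b}|lborel. \<psi> x * w x) =
      (LINT x:{a..b}|lborel. \<psi> a * w x + w x * (LINT t:{a..x}|lborel. d t))"
    by (rule set_lebesgue_integral_cong) (use \<psi>_eq in auto)
  also have "\<dots> = \<psi> a * (W b - W a) + (LINT t:{a..b}|lborel. W b * d t - d t * W t)"
    using set_integral_FTC_Icc[OF ab W] w swap set_integral_add(2)[OF set_integrable_mult_right[OF w_int] swap(1)]
    by (simp add: continuous_on_eq_continuous_at right_diff_distrib mult.commute)
  also have "(LINT t:{a..b}|lborel. W b * d t - d t * W t) = W b * (\<psi> b - \<psi> a) - (LINT t:{a..b}|lborel. d t * W t)"
    using set_integral_diff(2)[OF set_integrable_mult_right[OF d_int] dW_int] H01_eq_integral[OF H a ab b]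
    by simp
  finally have "(LINT x:{a..b}|lborel. \<psi> x * w x) = \<psi> b * W b - \<psi> a * W a - (LINT t:{a..b}|lborel. d t * W t)"
    by (simp add: algebra_simps)
  moreover have "set_integrable lborel {a..b} (\<lambda>x. \<psi> x * w x)"
    by (rule H01_set_integrable_continuous_mult[OF H a b continuous_on_subset[OF w]]) simp
  ultimately show ?thesis using set_integral_add(2)[OF dW_int] by simp
qed

section \<open>The calibration estimate\<close>

lemma AE_in_Icc_interior:
  fixes a b :: real
  assumes "\<And>x. a < x \<Longrightarrow> x < b \<Longrightarrow> P x"
  shows "AE x\<in>{a..b} in lborel. P x"
  using AE_lborel_singleton[of a] AE_lborel_singleton[of b]
  by eventually_elim (use assms in auto)

text \<open>The common estimate behind all three problems: integrating by parts against a smooth \<open>W\<close>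
  turns the boundary values of \<open>\<psi>\<close> into \<open>\<integral> d W + \<psi> (w + e)\<close>, which AM-GM bounds by the energy
  of \<open>\<psi>\<close>; the bound is attained when \<open>(d, k\<^sup>2\<psi>)\<close> is proportional to \<open>(W, w + e)\<close>.\<close>
lemma H01_calibration:
  fixes \<psi> d W w :: "real \<Rightarrow> real"
  assumes H: "(\<psi>, d) \<in> H01" and a: "-1 \<le> a" and ab: "a \<le> b" and b: "b \<le> 1"
    and W: "\<And>x. (W has_real_derivative w x) (at x)" and w: "continuous_on UNIV w"
    and \<alpha>: "0 < \<alpha>" and k: "0 < k"
  shows "2 * (\<psi> b * W b - \<psi> a * W a + e * (LINT x:{a..b}|lborel. \<psi> x)) \<le>
      \<alpha> * ((LINT x:{a..b}|lborel. (d x)\<^sup>2) + k\<^sup>2 * (LINT x:{a..b}|lborel. (\<psi> x)\<^sup>2)) +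
      (LINT x:{a..b}|lborel. (W x)\<^sup>2 + ((w x + e) / k)\<^sup>2) / \<alpha>"
    and "(\<And>x. a < x \<Longrightarrow> x < b \<Longrightarrow> \<alpha> * d x = W x \<and> \<alpha> * k\<^sup>2 * \<psi> x = w x + e) \<Longrightarrow>
      2 * (\<psi> b * W b - \<psi> a * W a + e * (LINT x:{a..b}|lborel. \<psi> x)) =
      \<alpha> * ((LINT x:{a..b}|lborel. (d x)\<^sup>2) + k\<^sup>2 * (LINT x:{a..b}|lborel. (\<psi> x)\<^sup>2)) +
      (LINT x:{a..b}|lborel. (W x)\<^sup>2 + ((w x + e) / k)\<^sup>2) / \<alpha>"
proof -
  have \<psi>_cont: "continuous_on {a..b} \<psi>"
    by (rule continuous_on_subset[OF H01_continuous_on[OF H]]) (use a b in auto)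
  have W_cont: "continuous_on {a..b} W"
    using W by (meson DERIV_isCont continuous_at_imp_continuous_on)
  have w_cont: "continuous_on {a..b} w" using continuous_on_subset[OF w] by simp
  have cont_int: "set_integrable lborel {a..b} h" if "continuous_on {a..b} h" for h :: "real \<Rightarrow> real"
    using borel_integrable_atLeastAtMost'[OF that] .
  have dW: "set_integrable lborel {a..b} (\<lambda>x. d x * W x)"
    by (rule set_integrable_mult_continuous_on[OF H01_deriv_set_integrable[OF H a b] W_cont])
  have d2: "set_integrable lborel {a..b} (\<lambda>x. (d x)\<^sup>2)"
    using H01_deriv_set_integrable_square[OF H a b] .
  have W2: "set_integrable lborel {a..b} (\<lambda>x. (W x)\<^sup>2)"
    and \<psi>g: "set_integrable lborel {a..b} (\<lambda>x. (k * \<psi> x) * ((w x + e) / k))"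
    and \<psi>2: "set_integrable lborel {a..b} (\<lambda>x. (k * \<psi> x)\<^sup>2)"
    and g2: "set_integrable lborel {a..b} (\<lambda>x. ((w x + e) / k)\<^sup>2)"
    and \<psi>: "set_integrable lborel {a..b} \<psi>"
    and \<psi>w: "set_integrable lborel {a..b} (\<lambda>x. \<psi> x * w x)"
    using k by (auto intro!: cont_int continuous_intros \<psi>_cont W_cont w_cont)
  have \<psi>2_eq: "(LINT x:{a..b}|lborel. (k * \<psi> x)\<^sup>2) = k\<^sup>2 * (LINT x:{a..b}|lborel. (\<psi> x)\<^sup>2)"
    by (simp add: power_mult_distrib)
  have \<psi>g_eq: "(LINT x:{a..b}|lborel. (k * \<psi> x) * ((w x + e) / k)) =
      (LINT x:{a..b}|lborel. \<psi> x * w x) + e * (LINT x:{a..b}|lborel. \<psi> x)"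
  proof -
    have "(LINT x:{a..b}|lborel. (k * \<psi> x) * ((w x + e) / k)) = (LINT x:{a..b}|lborel. \<psi> x * w x + e * \<psi> x)"
      using k by (intro set_lebesgue_integral_cong) (auto simp: field_simps)
    then show ?thesis using set_integral_add(2)[OF \<psi>w set_integrable_mult_right[OF \<psi>]] by simp
  qed
  have E_eq: "(LINT x:{a..b}|lborel. (W x)\<^sup>2 + ((w x + e) / k)\<^sup>2) =
      (LINT x:{a..b}|lborel. (W x)\<^sup>2) + (LINT x:{a..b}|lborel. ((w x + e) / k)\<^sup>2)"
    by (rule set_integral_add(2)[OF W2 g2])
  have boundary: "(LINT x:{a..b}|lborel. d x * W x) + (LINT x:{a..b}|lborel. \<psi> x * w x) = \<psi> b * W b - \<psi> a * W a"
    using H01_integration_by_parts[OF H a ab b W w] set_integral_add(2)[OF dW \<psi>w] by simp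
  note AM1 = set_integral_mult_le_AM_GM[OF \<alpha> dW d2 W2]
   and AM2 = set_integral_mult_le_AM_GM[OF \<alpha> \<psi>g \<psi>2 g2]
  show "2 * (\<psi> b * W b - \<psi> a * W a + e * (LINT x:{a..b}|lborel. \<psi> x)) \<le>
      \<alpha> * ((LINT x:{a..b}|lborel. (d x)\<^sup>2) + k\<^sup>2 * (LINT x:{a..b}|lborel. (\<psi> x)\<^sup>2)) +
      (LINT x:{a..b}|lborel. (W x)\<^sup>2 + ((w x + e) / k)\<^sup>2) / \<alpha>"
    using AM1(1) AM2(1) unfolding \<psi>2_eq \<psi>g_eq E_eq boundary[symmetric]
    by (simp add: algebra_simps add_divide_distrib)
  assume eq: "\<And>x. a < x \<Longrightarrow> x < b \<Longrightarrow> \<alpha> * d x = W x \<and> \<alpha> * k\<^sup>2 * \<psi> x = w x + e"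
  have "AE x\<in>{a..b} in lborel. \<alpha> * d x = W x"
    by (rule AE_in_Icc_interior) (use eq in blast)
  moreover have "AE x\<in>{a..b} in lborel. \<alpha> * (k * \<psi> x) = (w x + e) / k"
    by (rule AE_in_Icc_interior) (use eq k in \<open>auto simp: field_simps power2_eq_square\<close>)
  ultimately show "2 * (\<psi> b * W b - \<psi> a * W a + e * (LINT x:{a..b}|lborel. \<psi> x)) =
      \<alpha> * ((LINT x:{a..b}|lborel. (d x)\<^sup>2) + k\<^sup>2 * (LINT x:{a..b}|lborel. (\<psi> x)\<^sup>2)) +
      (LINT x:{a..b}|lborel. (W x)\<^sup>2 + ((w x + e) / k)\<^sup>2) / \<alpha>"
    using AM1(2) AM2(2) unfolding \<psi>2_eq \<psi>g_eq E_eq boundary[symmetric]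
    by (simp add: algebra_simps add_divide_distrib)
qed

lemma H01_piecewise_smooth:
  fixes pL pR dL dR :: "real \<Rightarrow> real"
  assumes pL: "\<And>x. (pL has_real_derivative dL x) (at x)" and pR: "\<And>x. (pR has_real_derivative dR x) (at x)"
    and dL: "\<And>x. isCont dL x" and dR: "\<And>x. isCont dR x"
    and left: "pL (-1) = 0" and right: "pR 1 = 0" and glue: "pL 0 = pR 0"
  shows "((\<lambda>x. if x \<le> 0 then pL x else pR x), (\<lambda>x. if x \<le> 0 then dL x else dR x)) \<in> H01"
proof -
  define d where "d x = (if x \<le> 0 then dL x else dR x)" for x :: real
  have [measurable]: "dL \<in> borel_measurable borel" "dR \<in> borel_measurable borel"
    using dL dR by (auto intro!: borel_measurable_continuous_onI continuous_at_imp_continuous_on)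
  have "d \<in> borel_measurable borel" unfolding d_def by measurable
  then have meas: "set_borel_measurable lborel {-1..1} d"
    unfolding set_borel_measurable_def by measurable
  have piece_int: "set_integrable lborel I (\<lambda>x. h (d x))"
    if "I \<subseteq> {a..b}" "I \<in> sets lborel" "\<And>x. x \<in> I \<Longrightarrow> d x = e x" "\<And>x. isCont (\<lambda>x. h (e x)) x"
    for I a b and h e :: "real \<Rightarrow> real"
  proof -
    have "set_integrable lborel {a..b} (\<lambda>x. h (e x))"
      using that(4) by (intro borel_integrable_atLeastAtMost' continuous_at_imp_continuous_on) auto
    then have "set_integrable lborel I (\<lambda>x. h (e x))" by (rule set_integrable_subset) (use that in auto)
    then show ?thesis using set_integrable_cong[of lborel lborel I I "\<lambda>x. h (d x)" "\<lambda>x. h (e x)"] that(3)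
      by simp
  qed
  have halves: "{-1..1} = {-1..0} \<union> {0<..1::real}" "{-1..0} \<inter> {0<..1::real} = {}" by auto
  have "set_integrable lborel {-1..0} (\<lambda>x. (d x)\<^sup>2)"
    by (rule piece_int[where e=dL and a="-1" and b=0]) (auto simp: d_def intro!: continuous_intros dL)
  moreover have "set_integrable lborel {0<..1} (\<lambda>x. (d x)\<^sup>2)"
    by (rule piece_int[where e=dR and a=0 and b=1]) (auto simp: d_def intro!: continuous_intros dR)
  ultimately have sq: "set_integrable lborel {-1..1} (\<lambda>x. (d x)\<^sup>2)"
    using set_integrable_Un halves by fastforce
  have int_left: "(LINT t:{a..b}|lborel. d t) = pL b - pL a" if "a \<le> b" "b \<le> 0" for a b
  proof -
    have "(LINT t:{a..b}|lborel. d t) = (LINT t:{a..b}|lborel. dL t)"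
      by (rule set_lebesgue_integral_cong) (use that in \<open>auto simp: d_def\<close>)
    then show ?thesis using set_integral_FTC_Icc[OF that(1) pL dL] by simp
  qed
  have antideriv: "(if x \<le> 0 then pL x else pR x) = (LINT t:{-1..x}|lborel. d t)" if x: "x \<in> {-1..1}" for x
  proof (cases "x \<le> 0")
    case True
    then show ?thesis using int_left[of "-1" x] x left by auto
  next
    case False
    have "{-1..x} = {-1..0} \<union> {0<..x}" "{-1..0} \<inter> {0<..x} = {}" using False x by auto
    moreover have "set_integrable lborel {-1..0} d"
      by (rule piece_int[where h="\<lambda>y. y" and e=dL and a="-1" and b=0]) (auto simp: d_def dL)
    moreover have "set_integrable lborel {0<..x} d"
      by (rule piece_int[where h="\<lambda>y. y" and e=dR and a=0 and b=x]) (auto simp: d_def dR)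
    ultimately have "(LINT t:{-1..x}|lborel. d t) = (LINT t:{-1..0}|lborel. d t) + (LINT t:{0<..x}|lborel. d t)"
      using set_integral_Un[of "{-1..0}" "{0<..x}" lborel d] by simp
    also have "(LINT t:{0<..x}|lborel. d t) = (LINT t:{0..x}|lborel. dR t)"
      using set_integral_Ioc_eq_Icc[of 0 x dR] False
      by (subst set_lebesgue_integral_cong[where g=dR]) (auto simp: d_def)
    also have "\<dots> = pR x - pR 0" using set_integral_FTC_Icc[of 0 x pR dR] False pR dR by simp
    finally show ?thesis using int_left[of "-1" 0] left glue False by simp
  qed
  show ?thesis unfolding H01_def using meas sq antideriv right unfolding d_def by auto
qed

lemma L2sq_split:
  assumes "set_integrable lborel {-1..1} (\<lambda>x. (f x)\<^sup>2)"
  shows "L2sq f = (LINT x:{-1..0}|lborel. (f x)\<^sup>2) + (LINT x:{0..1}|lborel. (f x)\<^sup>2)"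
  unfolding L2sq_def using set_integral_Icc_split[OF assms, of 0] by simp

lemma L2sq_nonneg: "0 \<le> L2sq f"
  unfolding L2sq_def by (rule set_integral_square_nonneg)

section \<open>The function \<open>tanh y / y\<close> and its inverse\<close>

lemma sinh_gt_self:
  fixes z :: real
  assumes "0 < z"
  shows "z < sinh z"
proof -
  have "\<And>x. (sinh has_real_derivative cosh x) (at x)" by (auto intro!: derivative_eq_intros)
  then obtain t where t: "0 < t" "sinh z - sinh 0 = (z - 0) * cosh t"
    using MVT2[of 0 z sinh cosh] assms by blast
  have "1 < cosh t" using cosh_real_ge_1[of t] cosh_real_one_iff[of t] t(1) by linarith
  then have "z * 1 < z * cosh t" using assms by (intro mult_strict_left_mono) auto
  then show ?thesis using t by simp
qed

lemma tanh_less_self: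
  fixes y :: real
  assumes "0 < y"
  shows "tanh y < y"
proof -
  have "\<And>x. (tanh has_real_derivative 1 - (tanh x)\<^sup>2) (at x)" by (auto intro!: derivative_eq_intros)
  then obtain t where t: "0 < t" "tanh y - tanh 0 = (y - 0) * (1 - (tanh t)\<^sup>2)"
    using MVT2[of 0 y tanh "\<lambda>t. 1 - (tanh t)\<^sup>2"] assms by blast
  have "0 < tanh t" using t by simp
  then have "y * (1 - (tanh t)\<^sup>2) < y * 1" using assms by (intro mult_strict_left_mono) auto
  then show ?thesis using t by simp
qed

definition tanh_ratio :: "real \<Rightarrow> real" where
  "tanh_ratio y = tanh y / y"

lemma tanh_ratio_pos: "0 < y \<Longrightarrow> 0 < tanh_ratio y"
  by (simp add: tanh_ratio_def)

lemma tanh_ratio_less_1: "0 < y \<Longrightarrow> tanh_ratio y < 1"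
  by (simp add: tanh_ratio_def tanh_less_self)

lemma isCont_tanh_ratio: "y \<noteq> 0 \<Longrightarrow> isCont tanh_ratio y"
  unfolding tanh_ratio_def by (intro continuous_intros) (auto simp: tanh_def)

lemma tanh_ratio_strict_decreasing:
  assumes "0 < x" "x < y"
  shows "tanh_ratio y < tanh_ratio x"
proof (rule DERIV_neg_imp_decreasing_open[OF assms(2)])
  fix t assume t: "x < t" "t < y"
  then have t0: "0 < t" using assms by simp
  have "2 * t < sinh (2 * t)" using sinh_gt_self[of "2 * t"] t0 by simp
  then have "t < sinh t * cosh t" by (simp add: sinh_double)
  then have lt: "t / (cosh t)\<^sup>2 < sinh t / cosh t"
    by (simp add: power2_eq_square field_simps)
  have "1 - (tanh t)\<^sup>2 = ((cosh t)\<^sup>2 - (sinh t)\<^sup>2) / (cosh t)\<^sup>2"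
    by (simp add: tanh_def power_divide field_simps)
  also have "(cosh t)\<^sup>2 - (sinh t)\<^sup>2 = 1" using cosh_square_eq[of t] by simp
  finally have "(1 - (tanh t)\<^sup>2) * t - tanh t = t / (cosh t)\<^sup>2 - sinh t / cosh t"
    by (simp add: tanh_def)
  then have "(1 - (tanh t)\<^sup>2) * t - tanh t < 0" using lt by simp
  moreover have "(tanh_ratio has_real_derivative ((1 - (tanh t)\<^sup>2) * t - tanh t) / t\<^sup>2) (at t)"
    unfolding tanh_ratio_def[abs_def] using t0
    by (auto intro!: derivative_eq_intros simp: power2_eq_square field_simps)
  ultimately show "\<exists>D. (tanh_ratio has_real_derivative D) (at t) \<and> D < 0"
    using t0 by (auto simp: divide_neg_pos)
next
  show "continuous_on {x..y} tanh_ratio"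
    using assms by (intro continuous_at_imp_continuous_on ballI isCont_tanh_ratio) auto
qed

lemma tanh_ratio_less_iff: "0 < x \<Longrightarrow> 0 < y \<Longrightarrow> tanh_ratio x < tanh_ratio y \<longleftrightarrow> y < x"
  using tanh_ratio_strict_decreasing by (metis less_asym not_less_iff_gr_or_eq)

lemma tendsto_tanh_ratio_at_right_0: "(tanh_ratio \<longlongrightarrow> 1) (at_right 0)"
proof -
  have "(tanh has_real_derivative 1 - (tanh 0)\<^sup>2) (at (0::real))"
    by (auto intro!: derivative_eq_intros)
  then have "((\<lambda>y. (tanh y - tanh 0) / (y - 0)) \<longlongrightarrow> 1) (at (0::real))"
    by (simp add: has_field_derivative_iff)
  then show ?thesis by (simp add: tanh_ratio_def[abs_def] filterlim_at_split)
qed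

lemma tendsto_tanh_ratio_at_top: "(tanh_ratio \<longlongrightarrow> 0) at_top"
proof (rule Lim_null_comparison)
  show "\<forall>\<^sub>F y in at_top. norm (tanh_ratio y) \<le> 1 / y"
    using eventually_gt_at_top[of "0::real"]
  proof eventually_elim
    case (elim y)
    have "\<bar>tanh y\<bar> \<le> 1" using tanh_real_bounds[of y] by auto
    then show ?case using elim by (simp add: tanh_ratio_def abs_div divide_right_mono)
  qed
  show "((\<lambda>y::real. 1 / y) \<longlongrightarrow> 0) at_top"
    using tendsto_inverse_0_at_top[OF filterlim_ident] by (simp add: inverse_eq_divide)
qed

lemma tanh_ratio_surj:
  assumes "0 < r" "r < 1"
  shows "\<exists>y>0. tanh_ratio y = r"
proof -
  have "\<forall>\<^sub>F y in at_right 0. r < tanh_ratio y"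
    using order_tendstoD(1)[OF tendsto_tanh_ratio_at_right_0 assms(2)] .
  then obtain a where a: "0 < a" "\<And>y. 0 < y \<Longrightarrow> y < a \<Longrightarrow> r < tanh_ratio y"
    by (auto simp: eventually_at_right_field)
  have "\<forall>\<^sub>F y in at_top. tanh_ratio y < r"
    using order_tendstoD(2)[OF tendsto_tanh_ratio_at_top assms(1)] .
  then obtain b where b: "\<And>y. b \<le> y \<Longrightarrow> tanh_ratio y < r"
    by (auto simp: eventually_at_top_linorder)
  have "a / 2 \<le> max a b" "r < tanh_ratio (a / 2)" "tanh_ratio (max a b) < r"
    using a b by auto
  then obtain y where "a / 2 \<le> y" "tanh_ratio y = r"
    using IVT2[of tanh_ratio "max a b" r "a / 2"] a isCont_tanh_ratio by fastforce
  then show ?thesis using a by (intro exI[of _ y]) auto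
qed

definition tanh_ratio_inv :: "real \<Rightarrow> real" where
  "tanh_ratio_inv r = (THE y. 0 < y \<and> tanh_ratio y = r)"

lemma tanh_ratio_inv:
  assumes "0 < r" "r < 1"
  shows "0 < tanh_ratio_inv r" and "tanh_ratio (tanh_ratio_inv r) = r"
proof -
  obtain y where y: "0 < y" "tanh_ratio y = r" using tanh_ratio_surj assms by blast
  have "tanh_ratio_inv r = y"
    unfolding tanh_ratio_inv_def
  proof (rule the_equality)
    show "z = y" if "0 < z \<and> tanh_ratio z = r" for z
      using that y tanh_ratio_less_iff[of z y] tanh_ratio_less_iff[of y z]
      by (cases z y rule: linorder_cases) auto
  qed (use y in simp)
  then show "0 < tanh_ratio_inv r" "tanh_ratio (tanh_ratio_inv r) = r" using y by simp_all
qed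

lemma less_tanh_ratio_inv_iff:
  "0 < y \<Longrightarrow> 0 < r \<Longrightarrow> r < 1 \<Longrightarrow> y < tanh_ratio_inv r \<longleftrightarrow> r < tanh_ratio y"
  using tanh_ratio_less_iff[of "tanh_ratio_inv r" y] tanh_ratio_inv[of r] by auto

lemma tanh_ratio_inv_less_iff:
  "0 < y \<Longrightarrow> 0 < r \<Longrightarrow> r < 1 \<Longrightarrow> tanh_ratio_inv r < y \<longleftrightarrow> tanh_ratio y < r"
  using tanh_ratio_less_iff[of y "tanh_ratio_inv r"] tanh_ratio_inv[of r] by auto

lemma tanh_ratio_inv_tanh_ratio: "0 < y \<Longrightarrow> tanh_ratio_inv (tanh_ratio y) = y"
  using less_tanh_ratio_inv_iff[of y "tanh_ratio y"] tanh_ratio_inv_less_iff[of y "tanh_ratio y"]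
    tanh_ratio_pos[of y] tanh_ratio_less_1[of y]
  by (cases y "tanh_ratio_inv (tanh_ratio y)" rule: linorder_cases) auto

lemma tanh_ratio_inv_strict_antimono: "strict_antimono_on {0<..<1} tanh_ratio_inv"
  unfolding monotone_on_def
proof (intro ballI impI)
  fix r s :: real assume "r \<in> {0<..<1}" "s \<in> {0<..<1}" "r < s"
  then show "tanh_ratio_inv s < tanh_ratio_inv r"
    using tanh_ratio_inv_less_iff[of "tanh_ratio_inv r" s] tanh_ratio_inv[of r] by simp
qed

lemma continuous_on_tanh_ratio_inv: "continuous_on {0<..<1} tanh_ratio_inv"
proof (intro continuous_at_imp_continuous_on ballI)
  fix r :: real assume "r \<in> {0<..<1}"
  define y where "y = tanh_ratio_inv r"
  have y: "0 < y" "tanh_ratio y = r" using tanh_ratio_inv \<open>r \<in> {0<..<1}\<close> by (auto simp: y_def)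
  have pos: "0 < z" if "\<bar>z - y\<bar> \<le> y / 2" for z
    using that y(1) by (auto simp: abs_if split: if_splits)
  have "isCont tanh_ratio_inv (tanh_ratio y)"
  proof (rule isCont_inverse_function[where d="y/2" and f=tanh_ratio and x=y])
    fix z assume "\<bar>z - y\<bar> \<le> y / 2"
    with pos have "0 < z" by blast
    then show "tanh_ratio_inv (tanh_ratio z) = z" "isCont tanh_ratio z"
      by (simp_all add: tanh_ratio_inv_tanh_ratio isCont_tanh_ratio)
  qed (use y in simp)
  then show "isCont tanh_ratio_inv r" using y by simp
qed

lemma filterlim_tanh_ratio_inv_at_right_0: "filterlim tanh_ratio_inv at_top (at_right 0)"
  unfolding filterlim_at_top
proof
  fix Z :: real
  define y where "y = max Z 1"
  have y: "0 < y" "0 < tanh_ratio y" "tanh_ratio y < 1"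
    using tanh_ratio_pos tanh_ratio_less_1 by (auto simp: y_def)
  show "\<forall>\<^sub>F r in at_right 0. Z \<le> tanh_ratio_inv r"
  proof (rule eventually_at_rightI[where b="tanh_ratio y"])
    fix r assume "r \<in> {0<..<tanh_ratio y}"
    then have "y < tanh_ratio_inv r" using less_tanh_ratio_inv_iff y by auto
    then show "Z \<le> tanh_ratio_inv r" by (simp add: y_def)
  qed (use y in simp)
qed

lemma tendsto_tanh_ratio_inv_at_left_1: "(tanh_ratio_inv \<longlongrightarrow> 0) (at_left 1)"
proof (rule order_tendstoI)
  fix a :: real assume "a < 0"
  then show "\<forall>\<^sub>F r in at_left 1. a < tanh_ratio_inv r"
    by (intro eventually_at_leftI[where a=0]) (auto dest: tanh_ratio_inv(1) intro: less_trans)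
next
  fix a :: real assume a: "0 < a"
  show "\<forall>\<^sub>F r in at_left 1. tanh_ratio_inv r < a"
  proof (rule eventually_at_leftI[where a="tanh_ratio a"])
    fix r assume "r \<in> {tanh_ratio a<..<1}"
    then show "tanh_ratio_inv r < a"
      using tanh_ratio_inv_less_iff[OF a, of r] tanh_ratio_pos[OF a] by auto
  qed (rule tanh_ratio_less_1[OF a])
qed

section \<open>The three sharp estimates for \<open>\<psi>(0)\<close>\<close>

lemma set_integral_square_le:
  fixes f :: "real \<Rightarrow> real"
  assumes ab: "a < b" and f: "set_integrable lborel {a..b} f"
    and f2: "set_integrable lborel {a..b} (\<lambda>x. (f x)\<^sup>2)"
  shows "(LINT x:{a..b}|lborel. f x)\<^sup>2 \<le> (b - a) * (LINT x:{a..b}|lborel. (f x)\<^sup>2)"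
proof -
  define I where "I = (LINT x:{a..b}|lborel. f x)"
  define c where "c = I / (b - a)"
  have "set_integrable lborel {a..b} (\<lambda>x. c\<^sup>2)"
    by (rule borel_integrable_atLeastAtMost') simp
  moreover have "set_integrable lborel {a..b} (\<lambda>x. f x * c)" using f by simp
  ultimately have "2 * (LINT x:{a..b}|lborel. f x * c) \<le>
      1 * (LINT x:{a..b}|lborel. (f x)\<^sup>2) + (LINT x:{a..b}|lborel. c\<^sup>2) / 1"
    by (intro set_integral_mult_le_AM_GM(1) f2) simp_all
  moreover have "(LINT x:{a..b}|lborel. c\<^sup>2) = c\<^sup>2 * b - c\<^sup>2 * a"
    by (rule set_integral_FTC_Icc) (use ab in \<open>auto intro!: derivative_eq_intros\<close>)
  ultimately have "2 * (I * c) \<le> (LINT x:{a..b}|lborel. (f x)\<^sup>2) + c\<^sup>2 * (b - a)"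
    by (simp add: I_def algebra_simps)
  moreover have "2 * (I * c) = 2 * (I\<^sup>2 / (b - a))" "c\<^sup>2 * (b - a) = I\<^sup>2 / (b - a)"
    using ab by (simp_all add: c_def power2_eq_square)
  ultimately have "I\<^sup>2 / (b - a) \<le> (LINT x:{a..b}|lborel. (f x)\<^sup>2)" by simp
  then show ?thesis using ab by (simp add: I_def pos_divide_le_eq mult.commute)
qed

lemma two_sq_at_0_le_L2sq:
  assumes H: "(\<psi>, d) \<in> H01"
  shows "2 * (\<psi> 0)\<^sup>2 \<le> L2sq d"
proof -
  have left: "\<psi> 0 = (LINT x:{-1..0}|lborel. d x)" and right: "- \<psi> 0 = (LINT x:{0..1}|lborel. d x)"
    using H01_eq_integral[OF H, of "-1" 0] H01_eq_integral[OF H, of 0 1]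
      H01_left_endpoint[OF H] H01_right_endpoint[OF H] by simp_all
  have "(LINT x:{-1..0}|lborel. d x)\<^sup>2 \<le> (0 - -1) * (LINT x:{-1..0}|lborel. (d x)\<^sup>2)"
    by (rule set_integral_square_le) (auto intro: H01_deriv_set_integrable[OF H] H01_deriv_set_integrable_square[OF H])
  moreover have "(LINT x:{0..1}|lborel. d x)\<^sup>2 \<le> (1 - 0) * (LINT x:{0..1}|lborel. (d x)\<^sup>2)"
    by (rule set_integral_square_le) (auto intro: H01_deriv_set_integrable[OF H] H01_deriv_set_integrable_square[OF H])
  ultimately show ?thesis
    unfolding left[symmetric] right[symmetric]
    using L2sq_split[OF H01_deriv_set_integrable_square[OF H order_refl order_refl]] by simp
qed

definition tent :: "real \<Rightarrow> real" where
  "tent x = 1 - \<bar>x\<bar>"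

definition tent_deriv :: "real \<Rightarrow> real" where
  "tent_deriv x = (if x \<le> 0 then 1 else -1)"

lemma tent_H01: "(tent, tent_deriv) \<in> H01"
proof -
  have "((\<lambda>x. if x \<le> 0 then 1 + x else 1 - x), tent_deriv) \<in> H01"
    unfolding tent_deriv_def[abs_def] by (rule H01_piecewise_smooth) (auto intro!: derivative_eq_intros)
  moreover have "tent = (\<lambda>x. if x \<le> 0 then 1 + x else 1 - x)" by (auto simp: tent_def fun_eq_iff)
  ultimately show ?thesis by simp
qed

lemma L2sq_tent_deriv: "L2sq tent_deriv = 2"
proof -
  have "L2sq tent_deriv = (LINT x:{-1..1::real}|lborel. 1::real)"
    unfolding L2sq_def by (rule set_lebesgue_integral_cong) (auto simp: tent_deriv_def)
  also have "\<dots> = 1 - (-1)"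
    by (rule set_integral_FTC_Icc[where F="\<lambda>x. x"]) (auto intro!: derivative_eq_intros)
  finally show ?thesis by simp
qed

text \<open>Solves \<open>\<psi>'' = k\<^sup>2 \<psi>\<close> on each half with \<open>\<psi>(\<plusminus>1) = 0\<close>; the derivative's value at the
  kink \<open>x = 0\<close> is irrelevant.\<close>
definition hc_extremal :: "real \<Rightarrow> real \<Rightarrow> real" where
  "hc_extremal k x = sinh (k * (1 - \<bar>x\<bar>))"

definition hc_extremal_deriv :: "real \<Rightarrow> real \<Rightarrow> real" where
  "hc_extremal_deriv k x = (if x \<le> 0 then k * cosh (k * (1 + x)) else - k * cosh (k * (1 - x)))"

lemma hc_extremal_H01: "(hc_extremal k, hc_extremal_deriv k) \<in> H01"
proof -
  have "((\<lambda>x. if x \<le> 0 then sinh (k * (1 + x)) else sinh (k * (1 - x))), hc_extremal_deriv k) \<in> H01"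
    unfolding hc_extremal_deriv_def
    by (rule H01_piecewise_smooth) (auto intro!: derivative_eq_intros continuous_intros)
  moreover have "hc_extremal k = (\<lambda>x. if x \<le> 0 then sinh (k * (1 + x)) else sinh (k * (1 - x)))"
    by (auto simp: hc_extremal_def fun_eq_iff)
  ultimately show ?thesis by simp
qed

lemma two_sq_at_0_le_tanh_ratio:
  fixes \<psi> d :: "real \<Rightarrow> real"
  assumes H: "(\<psi>, d) \<in> H01" and k: "0 < k"
  shows "2 * (\<psi> 0)\<^sup>2 \<le> tanh_ratio k * (L2sq d + k\<^sup>2 * L2sq \<psi>)"
    and "\<psi> = hc_extremal k \<Longrightarrow> d = hc_extremal_deriv k \<Longrightarrow>
      2 * (\<psi> 0)\<^sup>2 = tanh_ratio k * (L2sq d + k\<^sup>2 * L2sq \<psi>)"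
proof -
  define c where "c = \<psi> 0"
  define \<alpha> where "\<alpha> = sinh k / k"
  have \<alpha>: "0 < \<alpha>" using k by (simp add: \<alpha>_def)
  define DL DR PL PR where "DL = (LINT x:{-1..0}|lborel. (d x)\<^sup>2)" and "DR = (LINT x:{0..1}|lborel. (d x)\<^sup>2)"
    and "PL = (LINT x:{-1..0}|lborel. (\<psi> x)\<^sup>2)" and "PR = (LINT x:{0..1}|lborel. (\<psi> x)\<^sup>2)"
  have split: "L2sq d + k\<^sup>2 * L2sq \<psi> = (DL + k\<^sup>2 * PL) + (DR + k\<^sup>2 * PR)"
    using L2sq_split[OF H01_deriv_set_integrable_square[OF H order_refl order_refl]]
      L2sq_split[OF H01_set_integrable_square[OF H order_refl order_refl]]
    by (simp add: DL_def DR_def PL_def PR_def algebra_simps)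
  have energy: "(LINT x:{a..b}|lborel. (s * c * cosh (k * (1 + s * x)))\<^sup>2 + ((s\<^sup>2 * c * k * sinh (k * (1 + s * x)) + 0) / k)\<^sup>2) / \<alpha>
      = c\<^sup>2 * cosh k"
    if "s = 1 \<and> a = -1 \<and> b = 0 \<or> s = -1 \<and> a = 0 \<and> b = 1" for s a b :: real
  proof -
    have "(LINT x:{a..b}|lborel. (s * c * cosh (k * (1 + s * x)))\<^sup>2 + ((s\<^sup>2 * c * k * sinh (k * (1 + s * x)) + 0) / k)\<^sup>2)
        = s * c\<^sup>2 * sinh (k * (1 + s * b)) * cosh (k * (1 + s * b)) / k
          - s * c\<^sup>2 * sinh (k * (1 + s * a)) * cosh (k * (1 + s * a)) / k"
      by (rule set_integral_FTC_Icc)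
         (use that k in \<open>auto intro!: derivative_eq_intros continuous_intros simp: power2_eq_square field_simps\<close>)
    then show ?thesis using that k by (auto simp: \<alpha>_def field_simps)
  qed
  have W: "((\<lambda>x. s * c * cosh (k * (1 + s * x))) has_real_derivative s\<^sup>2 * c * k * sinh (k * (1 + s * x))) (at x)"
    for s x :: real
    by (auto intro!: derivative_eq_intros simp: power2_eq_square algebra_simps)
  have w: "continuous_on UNIV (\<lambda>x. s\<^sup>2 * c * k * sinh (k * (1 + s * x)))" for s :: real
    by (intro continuous_intros)
  note cal_L = H01_calibration[where a="-1" and b=0 and e=0, OF H _ _ _ W[of 1] w[of 1] \<alpha> k]
   and cal_R = H01_calibration[where a=0 and b=1 and e=0, OF H _ _ _ W[of "-1"] w[of "-1"] \<alpha> k]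
  have endpoints: "\<psi> (-1) = 0" "\<psi> 1 = 0" "\<psi> 0 = c"
    using H01_left_endpoint[OF H] H01_right_endpoint[OF H] by (simp_all add: c_def)
  have to_tanh_le: "2 * c\<^sup>2 * cosh k \<le> \<alpha> * X \<Longrightarrow> 2 * c\<^sup>2 \<le> tanh_ratio k * X"
    and to_tanh_eq: "2 * c\<^sup>2 * cosh k = \<alpha> * X \<Longrightarrow> 2 * c\<^sup>2 = tanh_ratio k * X" for X
    using k by (auto simp: \<alpha>_def tanh_ratio_def tanh_def field_simps)
  have "2 * (c\<^sup>2 * cosh k) \<le> \<alpha> * (DL + k\<^sup>2 * PL) + c\<^sup>2 * cosh k"
    and "2 * (c\<^sup>2 * cosh k) \<le> \<alpha> * (DR + k\<^sup>2 * PR) + c\<^sup>2 * cosh k"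
    using cal_L(1) cal_R(1) energy[of 1 "-1" 0] energy[of "-1" 0 1]
    by (simp_all add: endpoints DL_def DR_def PL_def PR_def power2_eq_square algebra_simps)
  then show "2 * (\<psi> 0)\<^sup>2 \<le> tanh_ratio k * (L2sq d + k\<^sup>2 * L2sq \<psi>)"
    unfolding c_def[symmetric] split by (intro to_tanh_le) (simp add: algebra_simps)
  assume ext: "\<psi> = hc_extremal k" "d = hc_extremal_deriv k"
  then have c: "c = sinh k" by (simp add: c_def hc_extremal_def)
  have eq_L: "\<alpha> * d x = 1 * c * cosh (k * (1 + 1 * x)) \<and> \<alpha> * k\<^sup>2 * \<psi> x = 1\<^sup>2 * c * k * sinh (k * (1 + 1 * x)) + 0"
    if "-1 < x" "x < 0" for x
    using that k unfolding ext c by (auto simp: hc_extremal_def hc_extremal_deriv_def \<alpha>_def power2_eq_square)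
  have eq_R: "\<alpha> * d x = -1 * c * cosh (k * (1 + -1 * x)) \<and>
      \<alpha> * k\<^sup>2 * \<psi> x = (-1)\<^sup>2 * c * k * sinh (k * (1 + -1 * x)) + 0"
    if "0 < x" "x < 1" for x
    using that k unfolding ext c by (auto simp: hc_extremal_def hc_extremal_deriv_def \<alpha>_def power2_eq_square)
  have "2 * (c\<^sup>2 * cosh k) = \<alpha> * (DL + k\<^sup>2 * PL) + c\<^sup>2 * cosh k"
    and "2 * (c\<^sup>2 * cosh k) = \<alpha> * (DR + k\<^sup>2 * PR) + c\<^sup>2 * cosh k"
    using cal_L(2)[OF _ _ _ eq_L] cal_R(2)[OF _ _ _ eq_R] energy[of 1 "-1" 0] energy[of "-1" 0 1]
    by (simp_all add: endpoints DL_def DR_def PL_def PR_def power2_eq_square algebra_simps)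
  then show "2 * (\<psi> 0)\<^sup>2 = tanh_ratio k * (L2sq d + k\<^sup>2 * L2sq \<psi>)"
    unfolding c_def[symmetric] split by (intro to_tanh_eq) (simp add: algebra_simps)
qed

text \<open>Solves \<open>\<psi>'''' = m\<^sup>2 \<psi>''\<close> on each half with \<open>\<psi> = \<psi>' = 0\<close> at \<open>\<plusminus>1\<close>.\<close>
definition vc_extremal :: "real \<Rightarrow> real \<Rightarrow> real" where
  "vc_extremal m x = cosh (m / 2) * (1 - \<bar>x\<bar>) - (sinh (m * (1 / 2 - \<bar>x\<bar>)) + sinh (m / 2)) / m"

definition vc_extremal_deriv :: "real \<Rightarrow> real \<Rightarrow> real" where
  "vc_extremal_deriv m x =
    (if x \<le> 0 then cosh (m / 2) - cosh (m * (1 / 2 + x)) else cosh (m * (1 / 2 - x)) - cosh (m / 2))"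

definition vc_extremal_deriv2 :: "real \<Rightarrow> real \<Rightarrow> real" where
  "vc_extremal_deriv2 m x = - m * sinh (m * (1 / 2 - \<bar>x\<bar>))"

lemma vc_extremal_H02:
  assumes m: "0 < m"
  shows "(vc_extremal m, vc_extremal_deriv m, vc_extremal_deriv2 m) \<in> H02"
proof -
  have half: "m * (1 / 2 + -1) = - (m / 2)" "m * (1 / 2 - 1) = - (m / 2)" by simp_all
  have "((\<lambda>x. if x \<le> 0 then cosh (m / 2) * (1 + x) - (sinh (m * (1 / 2 + x)) + sinh (m / 2)) / m
      else cosh (m / 2) * (1 - x) - (sinh (m * (1 / 2 - x)) + sinh (m / 2)) / m), vc_extremal_deriv m) \<in> H01"
    unfolding vc_extremal_deriv_def
    by (rule H01_piecewise_smooth)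
       (use m in \<open>auto intro!: derivative_eq_intros continuous_intros simp: half field_simps\<close>)
  moreover have "((vc_extremal_deriv m), (\<lambda>x. if x \<le> 0 then - m * sinh (m * (1 / 2 + x))
      else - m * sinh (m * (1 / 2 - x)))) \<in> H01"
    unfolding vc_extremal_deriv_def
    by (rule H01_piecewise_smooth) (auto intro!: derivative_eq_intros continuous_intros simp: half)
  moreover have "vc_extremal m = (\<lambda>x. if x \<le> 0 then cosh (m / 2) * (1 + x) - (sinh (m * (1 / 2 + x)) + sinh (m / 2)) / m
      else cosh (m / 2) * (1 - x) - (sinh (m * (1 / 2 - x)) + sinh (m / 2)) / m)"
    and "vc_extremal_deriv2 m = (\<lambda>x. if x \<le> 0 then - m * sinh (m * (1 / 2 + x)) else - m * sinh (m * (1 / 2 - x)))"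
    by (auto simp: vc_extremal_def vc_extremal_deriv2_def fun_eq_iff)
  ultimately show ?thesis by (simp add: H02_def)
qed

lemma two_sq_at_0_le_vc:
  fixes \<psi> d dd :: "real \<Rightarrow> real"
  assumes H: "(\<psi>, d, dd) \<in> H02" and m: "0 < m"
  shows "2 * (\<psi> 0)\<^sup>2 \<le> (1 - tanh_ratio (m / 2)) / m\<^sup>2 * (L2sq dd + m\<^sup>2 * L2sq d)"
    and "\<psi> = vc_extremal m \<Longrightarrow> d = vc_extremal_deriv m \<Longrightarrow> dd = vc_extremal_deriv2 m \<Longrightarrow>
      2 * (\<psi> 0)\<^sup>2 = (1 - tanh_ratio (m / 2)) / m\<^sup>2 * (L2sq dd + m\<^sup>2 * L2sq d)"
proof -
  have H1: "(\<psi>, d) \<in> H01" and H2: "(d, dd) \<in> H01" using H by (simp_all add: H02_def)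
  define c C S where "c = \<psi> 0" and "C = cosh (m / 2)" and "S = sinh (m / 2)"
  define V where "V = (1 - tanh_ratio (m / 2)) / m\<^sup>2"
  have C: "0 < C" by (simp add: C_def)
  have V: "0 < V" using tanh_ratio_less_1[of "m / 2"] m by (simp add: V_def)
  have V_eq: "V * m\<^sup>2 * C = C - 2 * S / m"
    using m C by (simp add: V_def tanh_ratio_def tanh_def C_def S_def field_simps)
  define W w where "W s x = - c * sinh (m * (1 / 2 + s * x)) / (m * C)"
    and "w s x = - s * c * cosh (m * (1 / 2 + s * x)) / C" for s x :: real
  have W_deriv: "(W s has_real_derivative w s x) (at x)" for s x
    unfolding W_def[abs_def] w_def using m C
    by (auto intro!: derivative_eq_intros simp: power2_eq_square field_simps)
  have w_cont: "continuous_on UNIV (w s)" for s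
    unfolding w_def[abs_def] using C by (intro continuous_intros) auto
  have energy: "(LINT x:{a..b}|lborel. (W s x)\<^sup>2 + ((w s x + s * c) / m)\<^sup>2) / V = c\<^sup>2"
    if "s = 1 \<and> a = -1 \<and> b = 0 \<or> s = -1 \<and> a = 0 \<and> b = 1" for s a b :: real
  proof -
    define F where "F x = c\<^sup>2 * (s * sinh (m * (1 / 2 + s * x)) * cosh (m * (1 / 2 + s * x)) / m
        + C\<^sup>2 * x - 2 * s * C * sinh (m * (1 / 2 + s * x)) / m) / (m * C)\<^sup>2" for x
    have "(LINT x:{a..b}|lborel. (W s x)\<^sup>2 + ((w s x + s * c) / m)\<^sup>2) = F b - F a"
    proof (rule set_integral_FTC_Icc)
      fix x
      have "s\<^sup>2 = 1" using that by auto
      then show "(F has_real_derivative (W s x)\<^sup>2 + ((w s x + s * c) / m)\<^sup>2) (at x)"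
        unfolding F_def[abs_def] W_def w_def using m C cosh_square_eq[of "m * (1 / 2 + s * x)"]
        by (auto intro!: derivative_eq_intros simp: power2_eq_square field_simps)
      show "isCont (\<lambda>x. (W s x)\<^sup>2 + ((w s x + s * c) / m)\<^sup>2) x"
        unfolding W_def w_def using m C by (intro continuous_intros) auto
    qed (use that in auto)
    also have "\<dots> = c\<^sup>2 * (C - 2 * S / m) / (m\<^sup>2 * C)"
      using that m C by (auto simp: F_def C_def S_def power2_eq_square field_simps)
    also have "\<dots> = c\<^sup>2 * V"
      unfolding V_eq[symmetric] using m C by simp
    finally show ?thesis using V by simp
  qed
  note cal_L = H01_calibration[where a="-1" and b=0 and e="1 * c", OF H2 _ _ _ W_deriv[of 1] w_cont[of 1] V m]
   and cal_R = H01_calibration[where a=0 and b=1 and e="-1 * c", OF H2 _ _ _ W_deriv[of "-1"] w_cont[of "-1"] V m]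
  have endpoints: "d (-1) = 0" "d 1 = 0" "(LINT x:{-1..0}|lborel. d x) = c" "(LINT x:{0..1}|lborel. d x) = - c"
    using H01_left_endpoint[OF H2] H01_right_endpoint[OF H2] H01_eq_integral[OF H1, of "-1" 0]
      H01_eq_integral[OF H1, of 0 1] H01_left_endpoint[OF H1] H01_right_endpoint[OF H1]
    by (simp_all add: c_def)
  have W0: "W 1 0 = - c * S / (m * C)" "W (-1) 0 = - c * S / (m * C)" by (simp_all add: W_def S_def)
  define DL DR PL PR where "DL = (LINT x:{-1..0}|lborel. (dd x)\<^sup>2)" and "DR = (LINT x:{0..1}|lborel. (dd x)\<^sup>2)"
    and "PL = (LINT x:{-1..0}|lborel. (d x)\<^sup>2)" and "PR = (LINT x:{0..1}|lborel. (d x)\<^sup>2)"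
  have split: "L2sq dd + m\<^sup>2 * L2sq d = (DL + m\<^sup>2 * PL) + (DR + m\<^sup>2 * PR)"
    using L2sq_split[OF H01_deriv_set_integrable_square[OF H2 order_refl order_refl]]
      L2sq_split[OF H01_deriv_set_integrable_square[OF H1 order_refl order_refl]]
    by (simp add: DL_def DR_def PL_def PR_def algebra_simps)
  have "2 * (c * (- (d 0 * S / (m * C))) + c\<^sup>2) \<le> V * (DL + m\<^sup>2 * PL) + c\<^sup>2"
    and "2 * (c * (d 0 * S / (m * C)) + c\<^sup>2) \<le> V * (DR + m\<^sup>2 * PR) + c\<^sup>2"
    using cal_L(1) cal_R(1) energy[of 1 "-1" 0] energy[of "-1" 0 1]
    by (simp_all add: endpoints W0 DL_def DR_def PL_def PR_def power2_eq_square algebra_simps)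
  then show "2 * (\<psi> 0)\<^sup>2 \<le> (1 - tanh_ratio (m / 2)) / m\<^sup>2 * (L2sq dd + m\<^sup>2 * L2sq d)"
    unfolding V_def[symmetric] c_def[symmetric] split by (simp add: algebra_simps)
  assume ext: "\<psi> = vc_extremal m" "d = vc_extremal_deriv m" "dd = vc_extremal_deriv2 m"
  then have "c = C - 2 * S / m" by (simp add: c_def vc_extremal_def C_def S_def)
  then have "V * m\<^sup>2 * C = c" using V_eq by simp
  then have Vm: "V * m = c / (m * C)" "V * m\<^sup>2 = c / C"
    using m C by (simp_all add: power2_eq_square field_simps)
  have eq_L: "V * dd x = W 1 x \<and> V * m\<^sup>2 * d x = w 1 x + 1 * c" if "-1 < x" "x < 0" for x
    using that m C Vm unfolding ext
    by (auto simp: vc_extremal_deriv_def vc_extremal_deriv2_def W_def w_def C_def field_simps)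
  have eq_R: "V * dd x = W (-1) x \<and> V * m\<^sup>2 * d x = w (-1) x + -1 * c" if "0 < x" "x < 1" for x
    using that m C Vm unfolding ext
    by (auto simp: vc_extremal_deriv_def vc_extremal_deriv2_def W_def w_def C_def field_simps)
  have "2 * (c * (- (d 0 * S / (m * C))) + c\<^sup>2) = V * (DL + m\<^sup>2 * PL) + c\<^sup>2"
    and "2 * (c * (d 0 * S / (m * C)) + c\<^sup>2) = V * (DR + m\<^sup>2 * PR) + c\<^sup>2"
    using cal_L(2)[OF _ _ _ eq_L] cal_R(2)[OF _ _ _ eq_R] energy[of 1 "-1" 0] energy[of "-1" 0 1]
    by (simp_all add: endpoints W0 DL_def DR_def PL_def PR_def power2_eq_square algebra_simps)
  then show "2 * (\<psi> 0)\<^sup>2 = (1 - tanh_ratio (m / 2)) / m\<^sup>2 * (L2sq dd + m\<^sup>2 * L2sq d)"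
    unfolding V_def[symmetric] c_def[symmetric] split by (simp add: algebra_simps)
qed

lemma set_integral_sinh_square_pos:
  fixes p q :: real
  assumes p: "0 < p" and q: "0 \<le> q" "q \<le> 1"
  shows "0 < (LINT x:{0..1}|lborel. (sinh (p * (q - x)))\<^sup>2)"
proof -
  define F where "F x = - sinh (2 * (p * (q - x))) / (4 * p) - x / 2" for x
  have "(LINT x:{0..1}|lborel. (sinh (p * (q - x)))\<^sup>2) = F 1 - F 0"
  proof (rule set_integral_FTC_Icc)
    fix x
    have "cosh (2 * (p * (q - x))) = 1 + 2 * (sinh (p * (q - x)))\<^sup>2"
      using cosh_double[of "p * (q - x)"] cosh_square_eq[of "p * (q - x)"] by simp
    then show "(F has_real_derivative (sinh (p * (q - x)))\<^sup>2) (at x)"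
      unfolding F_def[abs_def] using p by (auto intro!: derivative_eq_intros simp: field_simps)
  qed (auto intro!: continuous_intros)
  also have "\<dots> = (sinh (2 * p * (1 - q)) + sinh (2 * p * q)) / (4 * p) - 1 / 2"
  proof -
    have "sinh (2 * (p * (q - 1))) = - sinh (2 * p * (1 - q))"
      using sinh_minus[of "2 * p * (1 - q)"] by (simp add: algebra_simps)
    then show ?thesis using p by (simp add: F_def field_simps)
  qed
  finally have I: "(LINT x:{0..1}|lborel. (sinh (p * (q - x)))\<^sup>2) = \<dots>" .
  have "2 * p * (1 - q) \<le> sinh (2 * p * (1 - q))" "2 * p * q \<le> sinh (2 * p * q)"
    using sinh_gt_self[of "2 * p * (1 - q)"] sinh_gt_self[of "2 * p * q"] p q
    by (cases "q = 1"; cases "q = 0"; force simp: mult_pos_pos)+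
  moreover have "2 * p * (1 - q) < sinh (2 * p * (1 - q)) \<or> 2 * p * q < sinh (2 * p * q)"
    using sinh_gt_self[of "2 * p * (1 - q)"] sinh_gt_self[of "2 * p * q"] p q
    by (cases "q = 1") auto
  ultimately have "2 * p < sinh (2 * p * (1 - q)) + sinh (2 * p * q)"
    by (auto simp: algebra_simps)
  then show ?thesis unfolding I using p by (simp add: field_simps)
qed

lemma L2sq_hc_extremal_pos:
  assumes k: "0 < k"
  shows "0 < L2sq (hc_extremal k)"
proof -
  have "(LINT x:{0..1}|lborel. (hc_extremal k x)\<^sup>2) = (LINT x:{0..1}|lborel. (sinh (k * (1 - x)))\<^sup>2)"
    by (rule set_lebesgue_integral_cong) (auto simp: hc_extremal_def)
  then have "0 < (LINT x:{0..1}|lborel. (hc_extremal k x)\<^sup>2)"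
    using set_integral_sinh_square_pos[OF k, of 1] by simp
  then show ?thesis
    using L2sq_split[OF H01_set_integrable_square[OF hc_extremal_H01 order_refl order_refl]]
      set_integral_square_nonneg[where f="hc_extremal k" and A="{-1..0}" and M=lborel]
    by simp
qed

lemma L2sq_vc_extremal_deriv2_pos:
  assumes m: "0 < m"
  shows "0 < L2sq (vc_extremal_deriv2 m)"
proof -
  have H2: "(vc_extremal_deriv m, vc_extremal_deriv2 m) \<in> H01"
    using vc_extremal_H02[OF m] by (simp add: H02_def)
  have "(LINT x:{0..1}|lborel. (vc_extremal_deriv2 m x)\<^sup>2) = (LINT x:{0..1}|lborel. m\<^sup>2 * (sinh (m * (1 / 2 - x)))\<^sup>2)"
    by (rule set_lebesgue_integral_cong) (auto simp: vc_extremal_deriv2_def power_mult_distrib)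
  then have "0 < (LINT x:{0..1}|lborel. (vc_extremal_deriv2 m x)\<^sup>2)"
    using set_integral_sinh_square_pos[OF m, of "1 / 2"] m by simp
  then show ?thesis
    using L2sq_split[OF H01_deriv_set_integrable_square[OF H2 order_refl order_refl]]
      set_integral_square_nonneg[where f="vc_extremal_deriv2 m" and A="{-1..0}" and M=lborel]
    by simp
qed

section \<open>The three variational quantities\<close>

lemma Qc_le_half:
  assumes gr: "0 < g * rho" and H: "(\<psi>, d) \<in> H01"
  shows "Qc g rho \<psi> d \<le> g * rho / 2"
proof (cases "L2sq d = 0")
  case True
  then show ?thesis using gr by (simp add: Qc_def)
next
  case False
  then have "0 < L2sq d" using L2sq_nonneg[of d] by simp
  moreover have "g * rho * (2 * (\<psi> 0)\<^sup>2) \<le> g * rho * L2sq d"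
    using two_sq_at_0_le_L2sq[OF H] gr by (intro mult_left_mono) auto
  ultimately show ?thesis by (simp add: Qc_def pos_divide_le_eq)
qed

lemma Qc_tent: "Qc g rho tent tent_deriv = g * rho / 2"
  by (simp add: Qc_def L2sq_tent_deriv tent_def)

lemma nonzero_tent: "nonzero tent"
  by (auto simp: nonzero_def tent_def intro!: bexI[of _ 0])

lemma Bc2_eq:
  assumes "0 < g * rho"
  shows "Bc2 g rho = g * rho / 2"
  unfolding Bc2_def
proof (rule cSup_eq_maximum)
  show "g * rho / 2 \<in> {Qc g rho \<psi> d |\<psi> d. (\<psi>, d) \<in> H01 \<and> nonzero \<psi>}"
    using Qc_tent[of g rho] tent_H01 nonzero_tent by force
qed (use Qc_le_half[OF assms] in blast)

lemma Bc2_is_max: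
  assumes "0 < g * rho"
  shows "(\<exists>\<psi> d. (\<psi>, d) \<in> H01 \<and> nonzero \<psi> \<and> Qc g rho \<psi> d = Bc2 g rho) \<and>
    (\<forall>\<psi> d. (\<psi>, d) \<in> H01 \<and> nonzero \<psi> \<longrightarrow> Qc g rho \<psi> d \<le> Bc2 g rho)"
proof
  show "\<exists>\<psi> d. (\<psi>, d) \<in> H01 \<and> nonzero \<psi> \<and> Qc g rho \<psi> d = Bc2 g rho"
    by (intro exI[of _ tent] exI[of _ tent_deriv]) (simp add: Bc2_eq[OF assms] Qc_tent tent_H01 nonzero_tent)
  show "\<forall>\<psi> d. (\<psi>, d) \<in> H01 \<and> nonzero \<psi> \<longrightarrow> Qc g rho \<psi> d \<le> Bc2 g rho"
    using Qc_le_half[OF assms] by (simp add: Bc2_eq[OF assms])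
qed

lemma Bc_eq: "0 < g * rho \<Longrightarrow> Bc g rho = sqrt (g * rho / 2)"
  by (simp add: Bc_def Bc2_eq)

lemma square_ratio_Bc:
  assumes gr: "0 < g * rho" and B: "0 < \<bar>B\<bar>" "\<bar>B\<bar> < Bc g rho"
  shows "0 < (B / Bc g rho)\<^sup>2" "(B / Bc g rho)\<^sup>2 < 1" "B\<^sup>2 = g * rho / 2 * (B / Bc g rho)\<^sup>2"
proof -
  have Bc: "0 < Bc g rho" "(Bc g rho)\<^sup>2 = g * rho / 2" using gr B by (simp_all add: Bc_eq)
  have "\<bar>B\<bar>\<^sup>2 < (Bc g rho)\<^sup>2" using B by (intro power_strict_mono) auto
  then show "0 < (B / Bc g rho)\<^sup>2" "(B / Bc g rho)\<^sup>2 < 1"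
    using B Bc by (simp_all add: power_divide)
  show "B\<^sup>2 = g * rho / 2 * (B / Bc g rho)\<^sup>2"
    unfolding power_divide Bc(2)[symmetric] using Bc(1) by simp
qed

lemma Qhc_le:
  assumes gr: "0 < g * rho" and k: "0 < k" and B: "B\<^sup>2 = g * rho / 2 * tanh_ratio k"
    and H: "(\<psi>, d) \<in> H01"
  shows "Qhc g rho B \<psi> d \<le> k\<^sup>2"
proof -
  have "g * rho / 2 * (2 * (\<psi> 0)\<^sup>2) \<le> g * rho / 2 * (tanh_ratio k * (L2sq d + k\<^sup>2 * L2sq \<psi>))"
    using two_sq_at_0_le_tanh_ratio(1)[OF H k] gr by (intro mult_left_mono) auto
  then have D: "Dvc g rho B \<psi> d \<le> B\<^sup>2 * k\<^sup>2 * L2sq \<psi>"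
    by (simp add: Dvc_def B algebra_simps)
  show ?thesis
  proof (cases "L2sq \<psi> = 0")
    case False
    have "0 < B\<^sup>2" unfolding B using gr tanh_ratio_pos[OF k] by simp
    moreover have "0 < L2sq \<psi>" using False L2sq_nonneg[of \<psi>] by simp
    ultimately have "0 < B\<^sup>2 * L2sq \<psi>" by simp
    then show ?thesis using D by (simp add: Qhc_def pos_divide_le_eq algebra_simps)
  qed (simp add: Qhc_def)
qed

lemma Qhc_hc_extremal:
  assumes gr: "0 < g * rho" and k: "0 < k" and B: "B\<^sup>2 = g * rho / 2 * tanh_ratio k"
  shows "Qhc g rho B (hc_extremal k) (hc_extremal_deriv k) = k\<^sup>2"
proof -
  have "Dvc g rho B (hc_extremal k) (hc_extremal_deriv k) = B\<^sup>2 * k\<^sup>2 * L2sq (hc_extremal k)"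
    using two_sq_at_0_le_tanh_ratio(2)[OF hc_extremal_H01 k refl refl]
    by (simp add: Dvc_def B algebra_simps)
  moreover have "0 < B\<^sup>2" unfolding B using gr tanh_ratio_pos[OF k] by simp
  ultimately show ?thesis using L2sq_hc_extremal_pos[OF k] by (simp add: Qhc_def)
qed

lemma xi_hc2_eq:
  assumes gr: "0 < g * rho" and k: "0 < k" and B: "B\<^sup>2 = g * rho / 2 * tanh_ratio k"
  shows "xi_hc2 g rho B = k\<^sup>2"
  unfolding xi_hc2_def
proof (rule cSup_eq_maximum)
  have "nonzero (hc_extremal k)"
    using k by (auto simp: nonzero_def hc_extremal_def intro!: bexI[of _ 0])
  then show "k\<^sup>2 \<in> {Qhc g rho B \<psi> d |\<psi> d. (\<psi>, d) \<in> H01 \<and> nonzero \<psi>}"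
    using Qhc_hc_extremal[OF assms] hc_extremal_H01 by force
qed (use Qhc_le[OF assms] in auto)

lemma xi_hc2_is_max:
  assumes gr: "0 < g * rho" and B: "0 < \<bar>B\<bar>" "\<bar>B\<bar> < Bc g rho"
  shows "(\<exists>\<psi> d. (\<psi>, d) \<in> H01 \<and> nonzero \<psi> \<and> Qhc g rho B \<psi> d = xi_hc2 g rho B) \<and>
    (\<forall>\<psi> d. (\<psi>, d) \<in> H01 \<and> nonzero \<psi> \<longrightarrow> Qhc g rho B \<psi> d \<le> xi_hc2 g rho B)"
proof -
  define k where "k = tanh_ratio_inv ((B / Bc g rho)\<^sup>2)"
  note r = square_ratio_Bc[OF assms]
  have k: "0 < k" "B\<^sup>2 = g * rho / 2 * tanh_ratio k"
    using tanh_ratio_inv[OF r(1,2)] r(3) by (simp_all add: k_def)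
  have "nonzero (hc_extremal k)"
    using k by (auto simp: nonzero_def hc_extremal_def intro!: bexI[of _ 0])
  then show ?thesis
    unfolding xi_hc2_eq[OF gr k] using Qhc_hc_extremal[OF gr k] Qhc_le[OF gr k] hc_extremal_H01[of k] by blast
qed

lemma vc_extremal_at_0: "0 < m \<Longrightarrow> vc_extremal m 0 = (1 - tanh_ratio (m / 2)) * cosh (m / 2)"
  by (simp add: vc_extremal_def tanh_ratio_def tanh_def field_simps)

lemma Qvc_ge:
  assumes gr: "0 < g * rho" and m: "0 < m" and B: "B\<^sup>2 = g * rho / 2 * (1 - tanh_ratio (m / 2))"
    and H: "(\<psi>, d, dd) \<in> H02" and D: "0 < Dvc g rho B \<psi> d"
  shows "m\<^sup>2 \<le> Qvc g rho B \<psi> d dd"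
proof -
  have "g * rho * (\<psi> 0)\<^sup>2 = g * rho / 2 * (2 * (\<psi> 0)\<^sup>2)" by simp
  also have "\<dots> \<le> g * rho / 2 * ((1 - tanh_ratio (m / 2)) / m\<^sup>2 * (L2sq dd + m\<^sup>2 * L2sq d))"
    using two_sq_at_0_le_vc(1)[OF H m] gr by (intro mult_left_mono) auto
  also have "\<dots> = B\<^sup>2 / m\<^sup>2 * (L2sq dd + m\<^sup>2 * L2sq d)" by (simp add: B)
  finally have "m\<^sup>2 * Dvc g rho B \<psi> d \<le> B\<^sup>2 * L2sq dd"
    using m by (simp add: Dvc_def field_simps)
  then show ?thesis using D by (simp add: Qvc_def pos_le_divide_eq mult.commute)
qed

lemma Qvc_vc_extremal:
  assumes gr: "0 < g * rho" and m: "0 < m" and B: "B\<^sup>2 = g * rho / 2 * (1 - tanh_ratio (m / 2))"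
  shows "0 < Dvc g rho B (vc_extremal m) (vc_extremal_deriv m)"
    and "Qvc g rho B (vc_extremal m) (vc_extremal_deriv m) (vc_extremal_deriv2 m) = m\<^sup>2"
proof -
  have "g * rho * (vc_extremal m 0)\<^sup>2 = g * rho / 2 * (2 * (vc_extremal m 0)\<^sup>2)" by simp
  also have "\<dots> = g * rho / 2 * ((1 - tanh_ratio (m / 2)) / m\<^sup>2 *
      (L2sq (vc_extremal_deriv2 m) + m\<^sup>2 * L2sq (vc_extremal_deriv m)))"
    using two_sq_at_0_le_vc(2)[OF vc_extremal_H02[OF m] m refl refl refl] by simp
  also have "\<dots> = B\<^sup>2 / m\<^sup>2 * (L2sq (vc_extremal_deriv2 m) + m\<^sup>2 * L2sq (vc_extremal_deriv m))"
    by (simp add: B)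
  finally have eq: "m\<^sup>2 * Dvc g rho B (vc_extremal m) (vc_extremal_deriv m) = B\<^sup>2 * L2sq (vc_extremal_deriv2 m)"
    using m by (simp add: Dvc_def field_simps)
  have "0 < B\<^sup>2"
    unfolding B using gr tanh_ratio_less_1[of "m / 2"] m by simp
  then have "0 < m\<^sup>2 * Dvc g rho B (vc_extremal m) (vc_extremal_deriv m)"
    unfolding eq using L2sq_vc_extremal_deriv2_pos[OF m] by simp
  then show D: "0 < Dvc g rho B (vc_extremal m) (vc_extremal_deriv m)"
    using m by (simp add: zero_less_mult_iff)
  with eq show "Qvc g rho B (vc_extremal m) (vc_extremal_deriv m) (vc_extremal_deriv2 m) = m\<^sup>2"
    by (simp add: Qvc_def field_simps)
qed

lemma xi_vc2_eq:
  assumes gr: "0 < g * rho" and m: "0 < m" and B: "B\<^sup>2 = g * rho / 2 * (1 - tanh_ratio (m / 2))"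
  shows "xi_vc2 g rho B = m\<^sup>2"
  unfolding xi_vc2_def
proof (rule cInf_eq_minimum)
  show "m\<^sup>2 \<in> {Qvc g rho B \<psi> d dd |\<psi> d dd. (\<psi>, d, dd) \<in> H02 \<and> Dvc g rho B \<psi> d > 0}"
    using Qvc_vc_extremal[OF assms] vc_extremal_H02[OF m] by force
qed (use Qvc_ge[OF assms] in blast)

lemma xi_vc2_is_min:
  assumes gr: "0 < g * rho" and B: "\<bar>B\<bar> < Bc g rho"
  shows "(\<exists>\<psi> d dd. (\<psi>, d, dd) \<in> H02 \<and> Dvc g rho B \<psi> d > 0 \<and> Qvc g rho B \<psi> d dd = xi_vc2 g rho B) \<and>
    (\<forall>\<psi> d dd. (\<psi>, d, dd) \<in> H02 \<and> Dvc g rho B \<psi> d > 0 \<longrightarrow> xi_vc2 g rho B \<le> Qvc g rho B \<psi> d dd)"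
proof (cases "B = 0")
  case True
  have Q0: "Qvc g rho 0 \<psi> d dd = 0" for \<psi> d dd by (simp add: Qvc_def)
  have D: "0 < Dvc g rho 0 (vc_extremal 1) (vc_extremal_deriv 1)"
    using gr vc_extremal_at_0[of 1] tanh_ratio_less_1[of "1 / 2"] by (simp add: Dvc_def)
  have "xi_vc2 g rho 0 = 0"
    unfolding xi_vc2_def
  proof (rule cInf_eq_minimum)
    show "0 \<in> {Qvc g rho 0 \<psi> d dd |\<psi> d dd. (\<psi>, d, dd) \<in> H02 \<and> Dvc g rho 0 \<psi> d > 0}"
      using Q0 D vc_extremal_H02[of 1] by force
  qed (use Q0 in auto)
  then show ?thesis using True Q0 D vc_extremal_H02[of 1] by auto
next
  case False
  define m where "m = 2 * tanh_ratio_inv (1 - (B / Bc g rho)\<^sup>2)"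
  note r = square_ratio_Bc[OF gr _ B]
  have m: "0 < m" "B\<^sup>2 = g * rho / 2 * (1 - tanh_ratio (m / 2))"
    using tanh_ratio_inv[of "1 - (B / Bc g rho)\<^sup>2"] r False by (simp_all add: m_def)
  show ?thesis
    unfolding xi_vc2_eq[OF gr m]
    using Qvc_vc_extremal[OF gr m] Qvc_ge[OF gr m] vc_extremal_H02[OF m(1)] by blast
qed

lemma xi_hc_eq:
  assumes gr: "0 < g * rho" and B: "B \<in> {0<..<Bc g rho}"
  shows "xi_hc g rho B = tanh_ratio_inv ((B / Bc g rho)\<^sup>2)"
proof -
  note r = square_ratio_Bc[OF gr, of B]
  define k where "k = tanh_ratio_inv ((B / Bc g rho)\<^sup>2)"
  have k: "0 < k" "B\<^sup>2 = g * rho / 2 * tanh_ratio k"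
    using tanh_ratio_inv[of "(B / Bc g rho)\<^sup>2"] r B by (simp_all add: k_def)
  show ?thesis unfolding xi_hc_def xi_hc2_eq[OF gr k] k_def[symmetric] using k(1) by simp
qed

lemma xi_vc_eq:
  assumes gr: "0 < g * rho" and B: "B \<in> {0<..<Bc g rho}"
  shows "xi_vc g rho B = 2 * tanh_ratio_inv (1 - (B / Bc g rho)\<^sup>2)"
proof -
  note r = square_ratio_Bc[OF gr, of B]
  define m where "m = 2 * tanh_ratio_inv (1 - (B / Bc g rho)\<^sup>2)"
  have m: "0 < m" "B\<^sup>2 = g * rho / 2 * (1 - tanh_ratio (m / 2))"
    using tanh_ratio_inv[of "1 - (B / Bc g rho)\<^sup>2"] r B by (simp_all add: m_def)
  show ?thesis unfolding xi_vc_def xi_vc2_eq[OF gr m] m_def[symmetric] using m(1) by simp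
qed

section \<open>Dependence on \<open>B\<close>\<close>

lemma square_ratio_in_unit_interval:
  fixes c :: real
  assumes "0 < c" "B \<in> {0<..<c}"
  shows "(B / c)\<^sup>2 \<in> {0<..<1}"
  using assms by (auto simp: power_divide divide_less_eq intro: power_strict_mono)

lemma square_ratio_strict_mono:
  fixes c :: real
  assumes "0 < c" "0 < x" "x < y"
  shows "(x / c)\<^sup>2 < (y / c)\<^sup>2"
  using assms by (intro power_strict_mono divide_strict_right_mono) auto

lemma filterlim_square_ratio_at_right_0:
  fixes c :: real
  assumes "0 < c"
  shows "filterlim (\<lambda>B. (B / c)\<^sup>2) (at_right 0) (at_right 0)"
proof (rule tendsto_imp_filterlim_at_right)
  show "((\<lambda>B. (B / c)\<^sup>2) \<longlongrightarrow> 0) (at_right 0)"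
    using assms by (auto intro!: tendsto_eq_intros)
  show "\<forall>\<^sub>F B in at_right 0. 0 < (B / c)\<^sup>2"
    using eventually_at_right_less[of "0::real"] by eventually_elim (use assms in simp)
qed

lemma filterlim_square_ratio_at_left:
  fixes c :: real
  assumes "0 < c"
  shows "filterlim (\<lambda>B. (B / c)\<^sup>2) (at_left 1) (at_left c)"
proof (rule tendsto_imp_filterlim_at_left)
  show "((\<lambda>B. (B / c)\<^sup>2) \<longlongrightarrow> 1) (at_left c)"
    using assms by (auto intro!: tendsto_eq_intros)
  show "\<forall>\<^sub>F B in at_left c. (B / c)\<^sup>2 < 1"
    by (rule eventually_at_leftI[where a=0]) (use square_ratio_in_unit_interval assms in auto)
qed

lemma filterlim_one_minus_at_left_1: "filterlim (\<lambda>r::real. 1 - r) (at_right 0) (at_left 1)"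
  by (rule tendsto_imp_filterlim_at_right)
     (auto intro!: tendsto_eq_intros simp: eventually_at_left_field intro: exI[of _ 0])

lemma filterlim_one_minus_at_right_0: "filterlim (\<lambda>r::real. 1 - r) (at_left 1) (at_right 0)"
  by (rule tendsto_imp_filterlim_at_left)
     (auto intro!: tendsto_eq_intros simp: eventually_at_right_field intro: exI[of _ 1])

lemma eventually_in_Bc_interval:
  assumes "0 < g * rho" and "\<And>B. B \<in> {0<..<Bc g rho} \<Longrightarrow> P B"
  shows "eventually P (at_right 0)" and "eventually P (at_left (Bc g rho))"
  using assms by (auto intro!: eventually_at_rightI[where b="Bc g rho"] eventually_at_leftI[where a=0]
      simp: Bc_eq)

lemma xi_hc_continuous_on:
  assumes gr: "0 < g * rho"
  shows "continuous_on {0<..<Bc g rho} (xi_hc g rho)"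
proof -
  have c: "0 < Bc g rho" using gr by (simp add: Bc_eq)
  have "(\<lambda>B. (B / Bc g rho)\<^sup>2) ` {0<..<Bc g rho} \<subseteq> {0<..<1}"
    using square_ratio_in_unit_interval[OF c] by blast
  then have "continuous_on {0<..<Bc g rho} (\<lambda>B. tanh_ratio_inv ((B / Bc g rho)\<^sup>2))"
    using c by (intro continuous_on_compose2[OF continuous_on_tanh_ratio_inv] continuous_intros) auto
  then show ?thesis by (rule continuous_on_eq) (simp add: xi_hc_eq[OF gr])
qed

lemma xi_vc_continuous_on:
  assumes gr: "0 < g * rho"
  shows "continuous_on {0<..<Bc g rho} (xi_vc g rho)"
proof -
  have c: "0 < Bc g rho" using gr by (simp add: Bc_eq)
  have "(\<lambda>B. 1 - (B / Bc g rho)\<^sup>2) ` {0<..<Bc g rho} \<subseteq> {0<..<1}"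
    using square_ratio_in_unit_interval[OF c] by fastforce
  then have "continuous_on {0<..<Bc g rho} (\<lambda>B. 2 * tanh_ratio_inv (1 - (B / Bc g rho)\<^sup>2))"
    using c by (intro continuous_on_mult_left continuous_on_compose2[OF continuous_on_tanh_ratio_inv] continuous_intros) auto
  then show ?thesis by (rule continuous_on_eq) (simp add: xi_vc_eq[OF gr])
qed

lemma xi_hc_strict_antimono:
  assumes gr: "0 < g * rho"
  shows "strict_antimono_on {0<..<Bc g rho} (xi_hc g rho)"
  unfolding monotone_on_def
proof (intro ballI impI)
  fix x y assume x: "x \<in> {0<..<Bc g rho}" and y: "y \<in> {0<..<Bc g rho}" and "x < y"
  have c: "0 < Bc g rho" using gr by (simp add: Bc_eq)
  have "tanh_ratio_inv ((y / Bc g rho)\<^sup>2) < tanh_ratio_inv ((x / Bc g rho)\<^sup>2)"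
    using monotone_onD[OF tanh_ratio_inv_strict_antimono square_ratio_in_unit_interval[OF c x]
      square_ratio_in_unit_interval[OF c y] square_ratio_strict_mono[OF c _ \<open>x < y\<close>]] x
    by simp
  then show "xi_hc g rho y < xi_hc g rho x" using xi_hc_eq[OF gr x] xi_hc_eq[OF gr y] by simp
qed

lemma xi_vc_strict_mono:
  assumes gr: "0 < g * rho"
  shows "strict_mono_on {0<..<Bc g rho} (xi_vc g rho)"
  unfolding monotone_on_def
proof (intro ballI impI)
  fix x y assume x: "x \<in> {0<..<Bc g rho}" and y: "y \<in> {0<..<Bc g rho}" and "x < y"
  have c: "0 < Bc g rho" using gr by (simp add: Bc_eq)
  have "1 - (x / Bc g rho)\<^sup>2 \<in> {0<..<1}" "1 - (y / Bc g rho)\<^sup>2 \<in> {0<..<1}"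
    using square_ratio_in_unit_interval[OF c x] square_ratio_in_unit_interval[OF c y] by auto
  then have "tanh_ratio_inv (1 - (x / Bc g rho)\<^sup>2) < tanh_ratio_inv (1 - (y / Bc g rho)\<^sup>2)"
    using monotone_onD[OF tanh_ratio_inv_strict_antimono] square_ratio_strict_mono[OF c _ \<open>x < y\<close>] x
    by simp
  then show "xi_vc g rho x < xi_vc g rho y" using xi_vc_eq[OF gr x] xi_vc_eq[OF gr y] by simp
qed

lemma xi_hc_at_right_0:
  assumes gr: "0 < g * rho"
  shows "filterlim (xi_hc g rho) at_top (at_right 0)"
proof -
  have "filterlim (\<lambda>B. tanh_ratio_inv ((B / Bc g rho)\<^sup>2)) at_top (at_right 0)"
    using filterlim_compose[OF filterlim_tanh_ratio_inv_at_right_0 filterlim_square_ratio_at_right_0] gr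
    by (simp add: Bc_eq)
  then show ?thesis
    using filterlim_cong[OF refl refl eventually_in_Bc_interval(1)[OF gr xi_hc_eq[OF gr]]] by simp
qed

lemma xi_hc_at_left_Bc:
  assumes gr: "0 < g * rho"
  shows "(xi_hc g rho \<longlongrightarrow> 0) (at_left (Bc g rho))"
proof -
  have "((\<lambda>B. tanh_ratio_inv ((B / Bc g rho)\<^sup>2)) \<longlongrightarrow> 0) (at_left (Bc g rho))"
    using filterlim_compose[OF tendsto_tanh_ratio_inv_at_left_1 filterlim_square_ratio_at_left] gr
    by (simp add: Bc_eq)
  then show ?thesis
    using tendsto_cong[OF eventually_in_Bc_interval(2)[OF gr xi_hc_eq[OF gr]]] by simp
qed

lemma xi_vc_at_right_0:
  assumes gr: "0 < g * rho"
  shows "(xi_vc g rho \<longlongrightarrow> 0) (at_right 0)"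
proof -
  have "((\<lambda>B. tanh_ratio_inv (1 - (B / Bc g rho)\<^sup>2)) \<longlongrightarrow> 0) (at_right 0)"
    using filterlim_compose[OF tendsto_tanh_ratio_inv_at_left_1
        filterlim_compose[OF filterlim_one_minus_at_right_0 filterlim_square_ratio_at_right_0]] gr
    by (simp add: Bc_eq)
  then have "((\<lambda>B. 2 * tanh_ratio_inv (1 - (B / Bc g rho)\<^sup>2)) \<longlongrightarrow> 0) (at_right 0)"
    using tendsto_mult_right_zero by blast
  then show ?thesis
    using tendsto_cong[OF eventually_in_Bc_interval(1)[OF gr xi_vc_eq[OF gr]]] by simp
qed

lemma xi_vc_at_left_Bc:
  assumes gr: "0 < g * rho"
  shows "filterlim (xi_vc g rho) at_top (at_left (Bc g rho))"
proof -
  have "filterlim (\<lambda>B. tanh_ratio_inv (1 - (B / Bc g rho)\<^sup>2)) at_top (at_left (Bc g rho))"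
    using filterlim_compose[OF filterlim_tanh_ratio_inv_at_right_0
        filterlim_compose[OF filterlim_one_minus_at_left_1 filterlim_square_ratio_at_left]] gr
    by (simp add: Bc_eq)
  then have "filterlim (\<lambda>B. 2 * tanh_ratio_inv (1 - (B / Bc g rho)\<^sup>2)) at_top (at_left (Bc g rho))"
    by (intro filterlim_tendsto_pos_mult_at_top[OF tendsto_const]) simp_all
  then show ?thesis
    using filterlim_cong[OF refl refl eventually_in_Bc_interval(2)[OF gr xi_vc_eq[OF gr]]] by simp
qed

theorem lemma3p2:
  fixes g rho :: real
  assumes "g > 0" and "rho > 0"
  shows
   "\<comment> \<open>(i)\<close>
    ((\<exists>\<psi> d. (\<psi>, d) \<in> H01 \<and> nonzero \<psi> \<and> Qc g rho \<psi> d = Bc2 g rho) \<and>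
     (\<forall>\<psi> d. (\<psi>, d) \<in> H01 \<and> nonzero \<psi> \<longrightarrow> Qc g rho \<psi> d \<le> Bc2 g rho)) \<and>
    \<comment> \<open>(ii)\<close>
    (\<forall>B::real. \<bar>B\<bar> < Bc g rho \<longrightarrow>
       (\<exists>\<psi> d dd. (\<psi>, d, dd) \<in> H02 \<and> Dvc g rho B \<psi> d > 0 \<and>
           Qvc g rho B \<psi> d dd = xi_vc2 g rho B) \<and>
       (\<forall>\<psi> d dd. (\<psi>, d, dd) \<in> H02 \<and> Dvc g rho B \<psi> d > 0 \<longrightarrow>
           xi_vc2 g rho B \<le> Qvc g rho B \<psi> d dd)) \<and>
    continuous_on {0<..<Bc g rho} (xi_vc g rho) \<and>
    strict_mono_on {0<..<Bc g rho} (xi_vc g rho) \<and>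
    (xi_vc g rho \<longlongrightarrow> 0) (at_right 0) \<and>
    filterlim (xi_vc g rho) at_top (at_left (Bc g rho)) \<and>
    \<comment> \<open>(iii)\<close>
    (\<forall>B::real. 0 < \<bar>B\<bar> \<and> \<bar>B\<bar> < Bc g rho \<longrightarrow>
       (\<exists>\<psi> d. (\<psi>, d) \<in> H01 \<and> nonzero \<psi> \<and> Qhc g rho B \<psi> d = xi_hc2 g rho B) \<and>
       (\<forall>\<psi> d. (\<psi>, d) \<in> H01 \<and> nonzero \<psi> \<longrightarrow> Qhc g rho B \<psi> d \<le> xi_hc2 g rho B)) \<and>
    continuous_on {0<..<Bc g rho} (xi_hc g rho) \<and>
    strict_antimono_on {0<..<Bc g rho} (xi_hc g rho) \<and>
    filterlim (xi_hc g rho) at_top (at_right 0) \<and>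
    (xi_hc g rho \<longlongrightarrow> 0) (at_left (Bc g rho))"
proof -
  have gr: "0 < g * rho" using assms by simp
  show ?thesis
    using Bc2_is_max[OF gr] xi_vc2_is_min[OF gr] xi_vc_continuous_on[OF gr] xi_vc_strict_mono[OF gr]
      xi_vc_at_right_0[OF gr] xi_vc_at_left_Bc[OF gr] xi_hc2_is_max[OF gr] xi_hc_continuous_on[OF gr]
      xi_hc_strict_antimono[OF gr] xi_hc_at_right_0[OF gr] xi_hc_at_left_Bc[OF gr]
    by blast
qed

end
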